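(* For all formulas $\alpha,\beta,\delta$: (1) $\alpha\vDash\alpha$; (2) if $\alpha\vDash\beta$ and $\beta\vDash\delta$, then $\alpha\vDash\delta$.
   Context: Hilbert spaces and states: for $n\ge1$, $\mathcal H^{(n)}=(\mathbb C^2)^{\otimes n}$ with canonical basis $|x_1,\dots,x_n\rangle$ ($x_i\in\{0,1\}$, $|0\rangle=(1,0)$, $|1\rangle=(0,1)$); $\mathfrak D(\mathcal H^{(n)})$ is the set of density operators (qumixes). A truth-perspective is a unitary $\mathfrak T$ on $\mathbb C^2$, $\mathfrak T^{(n)}=\mathfrak T^{\otimes n}$. $^{\mathfrak T}P_1^{(n)}$ (resp. $^{\mathfrak T}P_0^{(n)}$) is the projection onto the span of the $\mathfrak T^{(n)}|x_1,\dots,x_n\rangle$ with $x_n=1$ (resp. $0$). $\mathtt p_{\mathfrak T}(\rho)=\mathrm{tr}(^{\mathfrak T}P_1^{(n)}\rho)$ for $\rho\in\mathfrak D(\mathcal H^{(n)})$, and $\rho\preceq_{\mathfrak T}\sigma$ iff $\mathtt p_{\mathfrak T}(\rho)\le\mathtt p_{\mathfrak T}(\sigma)$. $Red^{(j_1,\dots,j_s)}_{[n_1,\dots,n_t]}(\rho)$ is the reduced state of $\rho$ on factors $j_1,\dots,j_s$ of $\mathcal H^{(n_1)}\otimes\cdots\otimes\mathcal H^{(n_t)}$. Gates (canonical basis, extended linearly): $\mathtt{NOT}^{(n)}|x_1..x_n\rangle=|x_1..x_{n-1}\rangle\otimes|1-x_n\rangle$; $\sqrt{\mathtt I}^{(n)}|x_1..x_n\rangle=|x_1..x_{n-1}\rangle\otimes\frac1{\sqrt2}((-1)^{x_n}|x_n\rangle+|1-x_n\rangle)$;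 $\sqrt{\mathtt{NOT}}^{(n)}|x_1..x_n\rangle=|x_1..x_{n-1}\rangle\otimes(\frac{1-i}2|x_n\rangle+\frac{1+i}2|1-x_n\rangle)$; $\mathtt{XOR}^{(m,n)}|x_1..x_m,y_1..y_n\rangle=|x_1..x_m,y_1..y_{n-1}\rangle\otimes|x_m\oplus y_n\rangle$; $\mathtt T^{(m,n,p)}|x_1..x_m,y_1..y_n,z_1..z_p\rangle=|x_1..x_m,y_1..y_n,z_1..z_{p-1}\rangle\otimes|x_my_n\oplus z_p\rangle$ ($\oplus$ addition mod 2). For a gate $G$ on $\mathcal H^{(n)}$: $G_{\mathfrak T}=\mathfrak T^{(n)}G\mathfrak T^{(n)\dagger}$, $^{\mathfrak D}G_{\mathfrak T}(\rho)=G_{\mathfrak T}\rho G_{\mathfrak T}^\dagger$. Language: formulas built from atomic formulas (including distinguished atoms $\mathbf t,\mathbf f$) with unary $\lnot,\sqrt{id},\sqrt\lnot$, binary $\uplus$, ternary $\intercal$. $At(\alpha)$ = number of occurrences of atomic formulas in $\alpha$. Syntactical tree: $Level_1^\alpha=(\alpha)$; $Level_{i+1}^\alpha$ is obtained from $Level_i^\alpha=(\beta_1,\dots,\beta_r)$ by replacing each non-atomic $\beta_j$ by its immediate subformulas (arguments, in order) and keeping atomic $\beta_j$; the last level $Level_h^\alpha$ lists all atomic occurrences. $\mathcal H^{(At\alpha)}=\bigotimes_j\mathcal H^{(At\beta_j)}$. The $\mathfrak T$-gate $G^\alpha_{\mathfrak T(i)}$ ($1\le i<h$) is the tensor product over $j$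 of: identity of $\mathbb C^2$ if $\beta_j$ atomic; $\mathtt{NOT}_{\mathfrak T}^{(At\beta)}$, $\sqrt{\mathtt I}_{\mathfrak T}^{(At\beta)}$, $\sqrt{\mathtt{NOT}}_{\mathfrak T}^{(At\beta)}$ for $\lnot\beta,\sqrt{id}\beta,\sqrt\lnot\beta$; $\mathtt{XOR}_{\mathfrak T}^{(At\beta',At\beta'')}$ for $\beta'\uplus\beta''$; $\mathtt T_{\mathfrak T}^{(At\beta',At\beta'',At\beta''')}$ for $\intercal(\beta',\beta'',\beta''')$. Holistic model: a map $\mathtt{Hol}_{\mathfrak T}$ assigning to each level $Level_i^\alpha$ of each formula $\alpha$ a qumix in $\mathfrak D(\mathcal H^{(At\alpha)})$ such that (a) $\mathtt{Hol}_{\mathfrak T}(Level_i^\alpha)={}^{\mathfrak D}G^\alpha_{\mathfrak T(i)}(\mathtt{Hol}_{\mathfrak T}(Level_{i+1}^\alpha))$ for $1\le i<h$; (b) (normality) for each $\gamma$, with the contextual meaning of the occurrence $\beta_j$ in $Level_i^\gamma=(\beta_1,\dots,\beta_r)$ defined as $Red^{(j)}_{[At\beta_1,\dots,At\beta_r]}(\mathtt{Hol}_{\mathfrak T}(Level_i^\gamma))$, all occurrences of the same subformula $\beta$ in the tree of $\gamma$ have the same contextual meaning, denoted $\mathtt{Hol}^\gamma_{\mathfrak T}(\beta)$; (c) every occurrence of $\mathbf f$ (resp. $\mathbf t$) has contextual meaning $^{\mathfrak T}P_0^{(1)}$ (resp. $^{\mathfrak T}P_1^{(1)}$). Logical consequence: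 $\alpha\vDash\beta$ iff for every truth-perspective $\mathfrak T$, every formula $\gamma$ having both $\alpha$ and $\beta$ as subformulas (a formula counts as a subformula of itself), and every holistic model $\mathtt{Hol}_{\mathfrak T}$, $\mathtt{Hol}^\gamma_{\mathfrak T}(\alpha)\preceq_{\mathfrak T}\mathtt{Hol}^\gamma_{\mathfrak T}(\beta)$. *)

theory Defs
  imports Complex_Main
begin

datatype form =
    Atom nat
  | Tt
  | Ff
  | Neg form
  | SqId form
  | SqNeg form
  | Xor form form
  | Toff form form form

fun atomic :: "form \<Rightarrow> bool" where
  "atomic (Atom k) = True"
| "atomic Tt = True"
| "atomic Ff = True"
| "atomic _ = False"

fun At :: "form \<Rightarrow> nat" where
  "At (Atom k) = 1"
| "At Tt = 1"
| "At Ff = 1"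
| "At (Neg a) = At a"
| "At (SqId a) = At a"
| "At (SqNeg a) = At a"
| "At (Xor a b) = At a + At b"
| "At (Toff a b c) = At a + At b + At c"

fun args :: "form \<Rightarrow> form list" where
  "args (Neg a) = [a]"
| "args (SqId a) = [a]"
| "args (SqNeg a) = [a]"
| "args (Xor a b) = [a, b]"
| "args (Toff a b c) = [a, b, c]"
| "args _ = []"

fun subf :: "form \<Rightarrow> form set" where
  "subf (Neg a) = insert (Neg a) (subf a)"
| "subf (SqId a) = insert (SqId a) (subf a)"
| "subf (SqNeg a) = insert (SqNeg a) (subf a)"
| "subf (Xor a b) = insert (Xor a b) (subf a \<union> subf b)"
| "subf (Toff a b c) = insert (Toff a b c) (subf a \<union> subf b \<union> subf c)"
| "subf x = {x}"

fun height :: "form \<Rightarrow> nat" where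
  "height (Neg a) = Suc (height a)"
| "height (SqId a) = Suc (height a)"
| "height (SqNeg a) = Suc (height a)"
| "height (Xor a b) = Suc (max (height a) (height b))"
| "height (Toff a b c) = Suc (max (height a) (max (height b) (height c)))"
| "height _ = 1"

definition expand :: "form \<Rightarrow> form list" where
  "expand b = (if atomic b then [b] else args b)"

definition expand_all :: "form list \<Rightarrow> form list" where
  "expand_all bs = concat (map expand bs)"

text \<open>Level i (1-indexed) of the syntactical tree of a.\<close>
definition level :: "form \<Rightarrow> nat \<Rightarrow> form list" where
  "level a i = (expand_all ^^ (i - 1)) [a]"

text \<open>Valid occurrence position: the j-th entry (0-indexed) of level i.\<close>
definition occ :: "form \<Rightarrow> nat \<Rightarrow> nat \<Rightarrow> bool" where
  "occ g i j \<longleftrightarrow> 1 \<le> i \<and> i \<le> height g \<and> j < length (level g i)"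

text \<open>An operator on H^(n) is represented by its matrix entries
  A x y = <x|A|y> in the canonical basis, indexed by bit lists of length n
  (False = |0>, True = |1>); entries outside the basis are 0.\<close>

type_synonym op = "bool list \<Rightarrow> bool list \<Rightarrow> complex"

definition blists :: "nat \<Rightarrow> bool list set" where
  "blists n = {xs. length xs = n}"

definition mult :: "nat \<Rightarrow> op \<Rightarrow> op \<Rightarrow> op" where
  "mult n A B = (\<lambda>x y. if length x = n \<and> length y = n
      then (\<Sum>z\<in>blists n. A x z * B z y) else 0)"

definition adj :: "op \<Rightarrow> op" where
  "adj A = (\<lambda>x y. cnj (A y x))"

definition trace :: "nat \<Rightarrow> op \<Rightarrow> complex" where
  "trace n A = (\<Sum>x\<in>blists n. A x x)"

definition id_op :: "nat \<Rightarrow> op" where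
  "id_op n = (\<lambda>x y. if length x = n \<and> x = y then 1 else 0)"

definition density :: "nat \<Rightarrow> op \<Rightarrow> bool" where
  "density n \<rho> \<longleftrightarrow>
     (\<forall>x y. \<not> (length x = n \<and> length y = n) \<longrightarrow> \<rho> x y = 0) \<and>
     (\<forall>x y. \<rho> x y = cnj (\<rho> y x)) \<and>
     (\<forall>v :: bool list \<Rightarrow> complex.
        0 \<le> Re (\<Sum>x\<in>blists n. \<Sum>y\<in>blists n. cnj (v x) * \<rho> x y * v y)) \<and>
     trace n \<rho> = 1"

text \<open>Tensor product of a list of operators, each given with its number of qubits.\<close>
fun tensor :: "(nat \<times> op) list \<Rightarrow> op" where
  "tensor [] = (\<lambda>x y. if x = [] \<and> y = [] then 1 else 0)"
| "tensor ((k, A) # rest) =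
     (\<lambda>x y. A (take k x) (take k y) * tensor rest (drop k x) (drop k y))"

text \<open>Reduced state of rho on the j-th factor (0-indexed) of
  H^(ns!0) \<otimes> ... \<otimes> H^(ns!(t-1)) (partial trace over the other factors).\<close>
definition red :: "nat list \<Rightarrow> nat \<Rightarrow> op \<Rightarrow> op" where
  "red ns j \<rho> = (\<lambda>x y. if length x = ns ! j \<and> length y = ns ! j then
      (let k = sum_list (take j ns) in
        \<Sum>z\<in>blists (sum_list ns - ns ! j).
          \<rho> (take k z @ x @ drop k z) (take k z @ y @ drop k z))
      else 0)"

text \<open>A truth-perspective: unitary on C^2, U b c = <b|U|c>.\<close>
definition unitary2 :: "(bool \<Rightarrow> bool \<Rightarrow> complex) \<Rightarrow> bool" where
  "unitary2 U \<longleftrightarrow>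
     (\<forall>a b. (\<Sum>c\<in>UNIV. U a c * cnj (U b c)) = (if a = b then 1 else 0)) \<and>
     (\<forall>a b. (\<Sum>c\<in>UNIV. cnj (U c a) * U c b) = (if a = b then 1 else 0))"

definition Tn :: "(bool \<Rightarrow> bool \<Rightarrow> complex) \<Rightarrow> nat \<Rightarrow> op" where
  "Tn U n = (\<lambda>x y. if length x = n \<and> length y = n
      then (\<Prod>i<n. U (x ! i) (y ! i)) else 0)"

definition conjT :: "(bool \<Rightarrow> bool \<Rightarrow> complex) \<Rightarrow> nat \<Rightarrow> op \<Rightarrow> op" where
  "conjT U n G = mult n (mult n (Tn U n) G) (adj (Tn U n))"

definition apply_op :: "nat \<Rightarrow> op \<Rightarrow> op \<Rightarrow> op" where
  "apply_op n G \<rho> = mult n (mult n G \<rho>) (adj G)"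

definition perm_gate :: "nat \<Rightarrow> (bool list \<Rightarrow> bool list) \<Rightarrow> op" where
  "perm_gate n f = (\<lambda>x y. if length x = n \<and> length y = n \<and> x = f y then 1 else 0)"

definition NOT_g :: "nat \<Rightarrow> op" where
  "NOT_g n = perm_gate n (\<lambda>y. butlast y @ [\<not> last y])"

definition XOR_g :: "nat \<Rightarrow> nat \<Rightarrow> op" where
  "XOR_g m n = perm_gate (m + n) (\<lambda>w. butlast w @ [w ! (m - 1) \<noteq> last w])"

definition TOFF_g :: "nat \<Rightarrow> nat \<Rightarrow> nat \<Rightarrow> op" where
  "TOFF_g m n p = perm_gate (m + n + p)
     (\<lambda>w. butlast w @ [(w ! (m - 1) \<and> w ! (m + n - 1)) \<noteq> last w])"

text \<open>sqrt I: |x',x_n> |-> |x'> \<otimes> 1/sqrt2 ((-1)^x_n |x_n> + |1-x_n>).\<close>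
definition SQI_g :: "nat \<Rightarrow> op" where
  "SQI_g n = (\<lambda>x y. if length x = n \<and> length y = n \<and> butlast x = butlast y
      then (if last x = last y then (if last y then -1 else 1) else 1)
             / complex_of_real (sqrt 2)
      else 0)"

text \<open>sqrt NOT: |x',x_n> |-> |x'> \<otimes> ((1-i)/2 |x_n> + (1+i)/2 |1-x_n>).\<close>
definition SQNOT_g :: "nat \<Rightarrow> op" where
  "SQNOT_g n = (\<lambda>x y. if length x = n \<and> length y = n \<and> butlast x = butlast y
      then (if last x = last y then (1 - \<i>) / 2 else (1 + \<i>) / 2)
      else 0)"

text \<open>The factor contributed by an entry of a level to the T-gate.\<close>
fun gate_of :: "(bool \<Rightarrow> bool \<Rightarrow> complex) \<Rightarrow> form \<Rightarrow> op" where
  "gate_of U (Neg a) = conjT U (At a) (NOT_g (At a))"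
| "gate_of U (SqId a) = conjT U (At a) (SQI_g (At a))"
| "gate_of U (SqNeg a) = conjT U (At a) (SQNOT_g (At a))"
| "gate_of U (Xor a b) = conjT U (At a + At b) (XOR_g (At a) (At b))"
| "gate_of U (Toff a b c) =
     conjT U (At a + At b + At c) (TOFF_g (At a) (At b) (At c))"
| "gate_of U _ = id_op 1"

definition level_gate :: "(bool \<Rightarrow> bool \<Rightarrow> complex) \<Rightarrow> form \<Rightarrow> nat \<Rightarrow> op" where
  "level_gate U a i = tensor (map (\<lambda>b. (At b, gate_of U b)) (level a i))"

definition P1 :: "(bool \<Rightarrow> bool \<Rightarrow> complex) \<Rightarrow> nat \<Rightarrow> op" where
  "P1 U n = conjT U n (\<lambda>x y. if length x = n \<and> x = y \<and> last x then 1 else 0)"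

definition P0 :: "(bool \<Rightarrow> bool \<Rightarrow> complex) \<Rightarrow> nat \<Rightarrow> op" where
  "P0 U n = conjT U n (\<lambda>x y. if length x = n \<and> x = y \<and> \<not> last x then 1 else 0)"

definition prob :: "(bool \<Rightarrow> bool \<Rightarrow> complex) \<Rightarrow> nat \<Rightarrow> op \<Rightarrow> real" where
  "prob U n \<rho> = Re (trace n (mult n (P1 U n) \<rho>))"

type_synonym hol = "form \<Rightarrow> nat \<Rightarrow> op"

definition ctx :: "hol \<Rightarrow> form \<Rightarrow> nat \<Rightarrow> nat \<Rightarrow> op" where
  "ctx Hol g i j = red (map At (level g i)) j (Hol g i)"

definition holistic :: "(bool \<Rightarrow> bool \<Rightarrow> complex) \<Rightarrow> hol \<Rightarrow> bool" where
  "holistic U Hol \<longleftrightarrow>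
     (\<forall>a i. 1 \<le> i \<and> i \<le> height a \<longrightarrow> density (At a) (Hol a i)) \<and>
     (\<forall>a i. 1 \<le> i \<and> i < height a \<longrightarrow>
        Hol a i = apply_op (At a) (level_gate U a i) (Hol a (Suc i))) \<and>
     (\<forall>g i j i' j'. occ g i j \<and> occ g i' j' \<and> level g i ! j = level g i' ! j' \<longrightarrow>
        ctx Hol g i j = ctx Hol g i' j') \<and>
     (\<forall>g i j. occ g i j \<and> level g i ! j = Ff \<longrightarrow> ctx Hol g i j = P0 U 1) \<and>
     (\<forall>g i j. occ g i j \<and> level g i ! j = Tt \<longrightarrow> ctx Hol g i j = P1 U 1)"

text \<open>Hol^g(b): the (common) contextual meaning of the occurrences of b in g.\<close>
definition holm :: "hol \<Rightarrow> form \<Rightarrow> form \<Rightarrow> op" where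
  "holm Hol g b = (SOME \<rho>. \<exists>i j. occ g i j \<and> level g i ! j = b \<and> \<rho> = ctx Hol g i j)"

definition entails :: "form \<Rightarrow> form \<Rightarrow> bool" (infix "\<Turnstile>" 50) where
  "a \<Turnstile> b \<longleftrightarrow>
     (\<forall>U g Hol. unitary2 U \<and> a \<in> subf g \<and> b \<in> subf g \<and> holistic U Hol \<longrightarrow>
        prob U (At a) (holm Hol g a) \<le> prob U (At b) (holm Hol g b))"

end

theory Submission
  imports Defs
begin

text \<open>For transitivity fix a perspective \<open>T\<close>, a holistic model
  \<open>Hol\<close> and a formula \<open>\<gamma>\<close> containing \<open>\<alpha>\<close> and \<open>\<delta>\<close>; \<open>\<beta>\<close> need not occur in \<open>\<gamma>\<close>.
  We change \<open>Hol\<close> only on the formula \<open>\<gamma>' = \<gamma> \<uplus> \<beta>\<close> so that it stays holistic and every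
  subformula of \<open>\<gamma>\<close> keeps in \<open>\<gamma>'\<close> the contextual meaning it had in \<open>\<gamma>\<close>; the hypotheses
  applied to \<open>\<gamma>'\<close> then give the claim.

  The construction rests on locality of contextual meanings: in a holistic model the
  meaning of an occurrence of \<open>e\<close> is obtained from the partial trace of the bottom-level
  state on the atoms of that occurrence by applying the gates of the tree of \<open>e\<close> alone,
  because the gates acting on the other atoms cancel under the partial trace. So a
  bottom state for \<open>\<gamma>'\<close> is prescribed by gluing: on the atoms of \<open>\<gamma>\<close> (and on every
  occurrence of a subformula of \<open>\<gamma>\<close> inside \<open>\<beta>\<close>) the reduced bottom state of \<open>\<gamma>\<close>, on
  the remaining atoms of \<open>\<beta>\<close> the projections \<open>P\<^sub>1\<close>, \<open>P\<^sub>0\<close>, combined by tensor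
  products, whose partial traces factor.\<close>

lemma finite_blists [simp]: "finite (blists n)"
proof -
  have "blists n = {xs. set xs \<subseteq> (UNIV::bool set) \<and> length xs = n}" by (auto simp: blists_def)
  thus ?thesis using finite_lists_length_eq[of "UNIV::bool set" n] by simp
qed

lemma mem_blists [simp]: "xs \<in> blists n \<longleftrightarrow> length xs = n"
  by (simp add: blists_def)

lemma blists_0 [simp]: "blists 0 = {[]}"
  by (auto simp: blists_def)

lemma blists_Suc0: "blists (Suc 0) = {[False], [True]}"
  by (auto simp: blists_def length_Suc_conv)

lemma blists_add: "blists (a + b) = (\<lambda>(u, v). u @ v) ` (blists a \<times> blists b)"
proof (rule set_eqI, rule iffI)
  fix w assume "w \<in> blists (a + b)"
  thus "w \<in> (\<lambda>(u, v). u @ v) ` (blists a \<times> blists b)"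
    by (auto intro!: image_eqI[of _ _ "(take a w, drop a w)"])
qed auto

lemma sum_blists_append:
  "(\<Sum>w\<in>blists (a + b). f w) = (\<Sum>u\<in>blists a. \<Sum>v\<in>blists b. f (u @ v))"
proof -
  have inj: "inj_on (\<lambda>(u, v). u @ v) (blists a \<times> blists b)"
    by (auto simp: inj_on_def)
  have "(\<Sum>w\<in>blists (a + b). f w) = (\<Sum>p\<in>blists a \<times> blists b. f (fst p @ snd p))"
    unfolding blists_add by (rule trans[OF sum.reindex[OF inj]]) (simp add: case_prod_unfold)
  also have "\<dots> = (\<Sum>u\<in>blists a. \<Sum>v\<in>blists b. f (u @ v))"
    by (simp add: sum.cartesian_product case_prod_unfold)
  finally show ?thesis .
qed

lemma sum_blists_append3:
  "(\<Sum>w\<in>blists (k + m + r). f w) =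
     (\<Sum>w1\<in>blists k. \<Sum>w2\<in>blists m. \<Sum>w3\<in>blists r. f (w1 @ w2 @ w3))"
  by (simp add: sum_blists_append add.assoc)

lemma sum_reorder3_bca:
  "(\<Sum>a\<in>A. \<Sum>b\<in>B. \<Sum>c\<in>C. f a b c) = (\<Sum>b\<in>B. \<Sum>c\<in>C. \<Sum>a\<in>A. f a b c)"
  by (rule trans[OF sum.swap sum.cong[OF refl sum.swap]])

lemma sum_reorder3_cab:
  "(\<Sum>a\<in>A. \<Sum>b\<in>B. \<Sum>c\<in>C. f a b c) = (\<Sum>c\<in>C. \<Sum>a\<in>A. \<Sum>b\<in>B. f a b c)"
  by (rule trans[OF sum.cong[OF refl sum.swap] sum.swap])

lemma sum_reorder4_cdab:
  "(\<Sum>a\<in>A. \<Sum>b\<in>B. \<Sum>c\<in>C. \<Sum>d\<in>D. f a b c d) = (\<Sum>c\<in>C. \<Sum>d\<in>D. \<Sum>a\<in>A. \<Sum>b\<in>B. f a b c d)"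
proof -
  have "(\<Sum>a\<in>A. \<Sum>b\<in>B. \<Sum>c\<in>C. \<Sum>d\<in>D. f a b c d) = (\<Sum>c\<in>C. \<Sum>a\<in>A. \<Sum>b\<in>B. \<Sum>d\<in>D. f a b c d)"
    by (rule sum_reorder3_cab)
  also have "\<dots> = (\<Sum>c\<in>C. \<Sum>d\<in>D. \<Sum>a\<in>A. \<Sum>b\<in>B. f a b c d)"
    by (intro sum.cong refl sum_reorder3_cab)
  finally show ?thesis .
qed

lemma sum_reorder4_bdac:
  "(\<Sum>a\<in>A. \<Sum>b\<in>B. \<Sum>c\<in>C. \<Sum>d\<in>D. f a b c d) = (\<Sum>b\<in>B. \<Sum>d\<in>D. \<Sum>a\<in>A. \<Sum>c\<in>C. f a b c d)"
proof -
  have "(\<Sum>a\<in>A. \<Sum>b\<in>B. \<Sum>c\<in>C. \<Sum>d\<in>D. f a b c d) = (\<Sum>b\<in>B. \<Sum>a\<in>A. \<Sum>c\<in>C. \<Sum>d\<in>D. f a b c d)"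
    by (rule sum.swap)
  also have "\<dots> = (\<Sum>b\<in>B. \<Sum>d\<in>D. \<Sum>a\<in>A. \<Sum>c\<in>C. f a b c d)"
    by (intro sum.cong refl sum_reorder3_cab)
  finally show ?thesis .
qed

definition supported :: "nat \<Rightarrow> op \<Rightarrow> bool" where
  "supported n A \<longleftrightarrow> (\<forall>x y. \<not> (length x = n \<and> length y = n) \<longrightarrow> A x y = 0)"

definition tensor_prod :: "nat \<Rightarrow> op \<Rightarrow> op \<Rightarrow> op" where
  "tensor_prod a A B = (\<lambda>x y. A (take a x) (take a y) * B (drop a x) (drop a y))"

definition unitary :: "nat \<Rightarrow> op \<Rightarrow> bool" where
  "unitary n G \<longleftrightarrow> supported n G \<and> mult n (adj G) G = id_op n \<and> mult n G (adj G) = id_op n"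

lemma supported_mult [simp]: "supported n (mult n A B)"
  by (simp add: supported_def mult_def)

lemma supported_id_op [simp]: "supported n (id_op n)"
  by (simp add: supported_def id_op_def)

lemma supported_adj: "supported n A \<Longrightarrow> supported n (adj A)"
  by (auto simp: supported_def adj_def)

lemma supported_apply_op [simp]: "supported n (apply_op n G \<rho>)"
  by (simp add: apply_op_def)

lemma supported_tensor_prod:
  "supported a A \<Longrightarrow> supported b B \<Longrightarrow> supported (a + b) (tensor_prod a A B)"
  unfolding supported_def tensor_prod_def
  by (metis (no_types, lifting) add_diff_cancel_left' append_take_drop_id length_append
      length_drop mult_eq_0_iff)

lemma tensor_append:
  "tensor (xs @ ys) = tensor_prod (sum_list (map fst xs)) (tensor xs) (tensor ys)"
proof (induction xs)
  case Nil thus ?case by (simp add: tensor_prod_def)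
next
  case (Cons p xs)
  obtain k A where p: "p = (k, A)" by fastforce
  show ?case
    using Cons by (simp add: fun_eq_iff p tensor_prod_def take_take drop_take drop_drop
        mult.assoc add.commute)
qed

lemma tensor_Nil: "tensor [] = id_op 0"
  by (auto simp: id_op_def fun_eq_iff)

lemma tensor_Cons: "tensor ((k, A) # rest) = tensor_prod k A (tensor rest)"
  by (simp add: tensor_prod_def fun_eq_iff)

lemma mult_assoc: "mult n (mult n A B) C = mult n A (mult n B C)"
proof (intro ext)
  fix x y
  show "mult n (mult n A B) C x y = mult n A (mult n B C) x y"
  proof (cases "length x = n \<and> length y = n")
    case True
    have "mult n (mult n A B) C x y = (\<Sum>z\<in>blists n. \<Sum>w\<in>blists n. A x w * B w z * C z y)"
      using True by (simp add: mult_def sum_distrib_right)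
    also have "\<dots> = (\<Sum>w\<in>blists n. A x w * (\<Sum>z\<in>blists n. B w z * C z y))"
      by (subst sum.swap) (simp add: sum_distrib_left mult.assoc)
    also have "\<dots> = mult n A (mult n B C) x y"
      using True by (simp add: mult_def)
    finally show ?thesis .
  qed (auto simp: mult_def)
qed

lemma mult_id_left: "supported n A \<Longrightarrow> mult n (id_op n) A = A"
  by (auto simp: fun_eq_iff mult_def id_op_def supported_def if_distrib[of "\<lambda>t. t * _"]
      cong: if_cong)

lemma mult_id_right: "supported n A \<Longrightarrow> mult n A (id_op n) = A"
  by (auto simp: fun_eq_iff mult_def id_op_def supported_def if_distrib[of "\<lambda>t. _ * t"]
      cong: if_cong)

lemma adj_adj [simp]: "adj (adj A) = A"
  by (simp add: adj_def)

lemma adj_id_op [simp]: "adj (id_op n) = id_op n"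
  by (auto simp: id_op_def adj_def fun_eq_iff)

lemma adj_mult: "adj (mult n A B) = mult n (adj B) (adj A)"
  by (auto simp: fun_eq_iff mult_def adj_def mult.commute)

lemma adj_tensor_prod: "adj (tensor_prod a A B) = tensor_prod a (adj A) (adj B)"
  by (simp add: fun_eq_iff adj_def tensor_prod_def)

lemma mult_tensor_prod:
  "mult (a + b) (tensor_prod a A B) (tensor_prod a C D) = tensor_prod a (mult a A C) (mult b B D)"
proof (intro ext)
  fix x y
  show "mult (a + b) (tensor_prod a A B) (tensor_prod a C D) x y =
        tensor_prod a (mult a A C) (mult b B D) x y"
  proof (cases "length x = a + b \<and> length y = a + b")
    case True
    have "mult (a + b) (tensor_prod a A B) (tensor_prod a C D) x y =
      (\<Sum>u\<in>blists a. \<Sum>v\<in>blists b.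
         (A (take a x) u * C u (take a y)) * (B (drop a x) v * D v (drop a y)))"
      using True by (simp add: mult_def sum_blists_append tensor_prod_def mult_ac)
    also have "\<dots> = tensor_prod a (mult a A C) (mult b B D) x y"
      using True by (simp add: tensor_prod_def mult_def sum_product)
    finally show ?thesis .
  qed (auto simp: tensor_prod_def mult_def)
qed

lemma id_op_tensor_prod: "id_op (a + b) = tensor_prod a (id_op a) (id_op b)"
proof (intro ext)
  fix x y :: "bool list"
  have "(length x = a + b \<and> x = y) \<longleftrightarrow>
        (length (take a x) = a \<and> take a x = take a y) \<and> (length (drop a x) = b \<and> drop a x = drop a y)"
    by (cases "length x = a + b") (auto, (metis append_take_drop_id)+)
  thus "id_op (a + b) x y = tensor_prod a (id_op a) (id_op b) x y"
    by (simp add: id_op_def tensor_prod_def)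
qed

lemma unitary_id_op: "unitary n (id_op n)"
  unfolding unitary_def by (simp add: mult_id_left)

lemma unitary_adj: "unitary n T \<Longrightarrow> unitary n (adj T)"
  by (simp add: unitary_def supported_adj)

lemma unitary_tensor_prod:
  "unitary a A \<Longrightarrow> unitary b B \<Longrightarrow> unitary (a + b) (tensor_prod a A B)"
  unfolding unitary_def
  by (simp add: supported_tensor_prod adj_tensor_prod mult_tensor_prod id_op_tensor_prod)

lemma unitary_columns:
  assumes "unitary k G" "a \<in> blists k" "b \<in> blists k"
  shows "(\<Sum>u\<in>blists k. G u b * cnj (G u a)) = (if a = b then 1 else 0)"
proof -
  have "mult k (adj G) G a b = id_op k a b" using assms(1) by (simp add: unitary_def)
  thus ?thesis using assms(2,3) by (simp add: mult_def adj_def id_op_def mult.commute)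
qed

lemma unitary_cancel_left: "unitary n T \<Longrightarrow> supported n X \<Longrightarrow> mult n (adj T) (mult n T X) = X"
  by (metis mult_assoc unitary_def mult_id_left)

lemma unitary_conjugate:
  assumes T: "unitary n T" and G: "unitary n G"
  shows "unitary n (mult n (mult n T G) (adj T))"
proof -
  have s: "supported n (adj T)" "supported n G" "supported n (adj G)"
    using T G by (auto simp: unitary_def supported_adj)
  let ?C = "mult n (mult n T G) (adj T)"
  have "mult n (adj ?C) ?C = mult n T (mult n (adj G) (mult n (adj T) (mult n T (mult n G (adj T)))))"
    by (simp add: adj_mult mult_assoc)
  also have "\<dots> = mult n T (mult n (adj G) (mult n G (adj T)))"
    using T s by (simp add: unitary_cancel_left)
  also have "\<dots> = id_op n"
    using G T s by (simp add: unitary_cancel_left unitary_def)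
  finally have 1: "mult n (adj ?C) ?C = id_op n" .
  have "mult n ?C (adj ?C) = mult n T (mult n G (mult n (adj T) (mult n T (mult n (adj G) (adj T)))))"
    by (simp add: adj_mult mult_assoc)
  also have "\<dots> = mult n T (mult n G (mult n (adj G) (adj T)))"
    using T s by (simp add: unitary_cancel_left)
  also have "\<dots> = id_op n"
    using unitary_adj[OF G] T s by (metis unitary_cancel_left adj_adj unitary_def)
  finally show ?thesis using 1 by (simp add: unitary_def)
qed

definition hermitian :: "op \<Rightarrow> bool" where
  "hermitian \<rho> \<longleftrightarrow> (\<forall>x y. \<rho> x y = cnj (\<rho> y x))"

definition pos_semidef :: "nat \<Rightarrow> op \<Rightarrow> bool" where
  "pos_semidef n \<rho> \<longleftrightarrow> (\<forall>v :: bool list \<Rightarrow> complex.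
     0 \<le> Re (\<Sum>x\<in>blists n. \<Sum>y\<in>blists n. cnj (v x) * \<rho> x y * v y))"

lemma density_iff:
  "density n \<rho> \<longleftrightarrow> supported n \<rho> \<and> hermitian \<rho> \<and> pos_semidef n \<rho> \<and> trace n \<rho> = 1"
  by (simp add: density_def supported_def hermitian_def pos_semidef_def)

lemma density_supported: "density n \<rho> \<Longrightarrow> supported n \<rho>"
  by (simp add: density_iff)

lemma density_trace: "density n \<rho> \<Longrightarrow> trace n \<rho> = 1"
  by (simp add: density_iff)

lemma apply_op_entry:
  "length x = n \<Longrightarrow> length y = n \<Longrightarrow>
   apply_op n G \<rho> x y = (\<Sum>w\<in>blists n. \<Sum>w'\<in>blists n. G x w * \<rho> w w' * cnj (G y w'))"
  unfolding apply_op_def mult_def adj_def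
  by (simp add: sum_distrib_right) (rule sum.swap)

lemma apply_op_id: "supported n \<rho> \<Longrightarrow> apply_op n (id_op n) \<rho> = \<rho>"
  by (simp add: apply_op_def mult_id_left mult_id_right)

lemma hermitian_apply_op: "hermitian \<rho> \<Longrightarrow> hermitian (apply_op n G \<rho>)"
  unfolding hermitian_def
proof (intro allI)
  fix x y assume h: "\<forall>x y. \<rho> x y = cnj (\<rho> y x)"
  have h': "cnj (\<rho> a b) = \<rho> b a" for a b using h by (metis complex_cnj_cnj)
  show "apply_op n G \<rho> x y = cnj (apply_op n G \<rho> y x)"
  proof (cases "length x = n \<and> length y = n")
    case True
    have "apply_op n G \<rho> x y = (\<Sum>w'\<in>blists n. \<Sum>w\<in>blists n. G x w * \<rho> w w' * cnj (G y w'))"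
      using True by (simp add: apply_op_entry) (rule sum.swap)
    also have "\<dots> = cnj (apply_op n G \<rho> y x)"
      using True by (simp add: apply_op_entry h' mult_ac)
    finally show ?thesis .
  qed (auto simp: apply_op_def mult_def)
qed

lemma pos_semidef_apply_op: "pos_semidef n \<rho> \<Longrightarrow> pos_semidef n (apply_op n G \<rho>)"
  unfolding pos_semidef_def
proof (intro allI)
  fix v :: "bool list \<Rightarrow> complex"
  assume h: "\<forall>v :: bool list \<Rightarrow> complex.
    0 \<le> Re (\<Sum>x\<in>blists n. \<Sum>y\<in>blists n. cnj (v x) * \<rho> x y * v y)"
  define V where "V w = (\<Sum>y\<in>blists n. cnj (G y w) * v y)" for w
  have "(\<Sum>x\<in>blists n. \<Sum>y\<in>blists n. cnj (v x) * apply_op n G \<rho> x y * v y) =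
        (\<Sum>x\<in>blists n. \<Sum>y\<in>blists n. \<Sum>w\<in>blists n. \<Sum>w'\<in>blists n.
           cnj (v x) * (G x w * \<rho> w w' * cnj (G y w')) * v y)"
    by (simp add: apply_op_entry sum_distrib_left sum_distrib_right)
  also have "\<dots> = (\<Sum>w\<in>blists n. \<Sum>w'\<in>blists n. \<Sum>x\<in>blists n. \<Sum>y\<in>blists n.
                    cnj (v x) * (G x w * \<rho> w w' * cnj (G y w')) * v y)"
    by (rule sum_reorder4_cdab)
  also have "\<dots> = (\<Sum>w\<in>blists n. \<Sum>w'\<in>blists n. cnj (V w) * \<rho> w w' * V w')"
    unfolding V_def by (simp add: sum_distrib_left sum_distrib_right mult_ac)
  finally show "0 \<le> Re (\<Sum>x\<in>blists n. \<Sum>y\<in>blists n. cnj (v x) * apply_op n G \<rho> x y * v y)"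
    using h by simp
qed

lemma trace_apply_op: "unitary n G \<Longrightarrow> trace n (apply_op n G \<rho>) = trace n \<rho>"
proof -
  assume u: "unitary n G"
  have "trace n (apply_op n G \<rho>) =
        (\<Sum>x\<in>blists n. \<Sum>w\<in>blists n. \<Sum>w'\<in>blists n. G x w * \<rho> w w' * cnj (G x w'))"
    by (simp add: trace_def apply_op_entry)
  also have "\<dots> = (\<Sum>w\<in>blists n. \<Sum>w'\<in>blists n. \<Sum>x\<in>blists n. G x w * \<rho> w w' * cnj (G x w'))"
    by (rule sum_reorder3_bca)
  also have "\<dots> = (\<Sum>w\<in>blists n. \<Sum>w'\<in>blists n. \<rho> w w' * (\<Sum>x\<in>blists n. G x w * cnj (G x w')))"
    by (simp add: sum_distrib_left mult_ac)
  also have "\<dots> = (\<Sum>w\<in>blists n. \<Sum>w'\<in>blists n. if w' = w then \<rho> w w' else 0)"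
    using unitary_columns[OF u] by (intro sum.cong refl) simp
  also have "\<dots> = trace n \<rho>"
    by (simp add: trace_def)
  finally show ?thesis .
qed

lemma density_apply_op: "density n \<rho> \<Longrightarrow> unitary n G \<Longrightarrow> density n (apply_op n G \<rho>)"
  by (simp add: density_iff hermitian_apply_op pos_semidef_apply_op trace_apply_op)

text \<open>\<open>reduce k m n \<rho>\<close> is the reduced state of \<open>\<rho>\<close> on the qubits \<open>k+1, \<dots>, k+m\<close> of \<open>n\<close>.\<close>

definition reduce :: "nat \<Rightarrow> nat \<Rightarrow> nat \<Rightarrow> op \<Rightarrow> op" where
  "reduce k m n \<rho> = (\<lambda>x y. if length x = m \<and> length y = m then
      (\<Sum>u\<in>blists k. \<Sum>v\<in>blists (n - k - m). \<rho> (u @ x @ v) (u @ y @ v)) else 0)"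

lemma red_eq_reduce:
  assumes j: "j < length ns"
  shows "red ns j \<rho> = reduce (sum_list (take j ns)) (ns ! j) (sum_list ns) \<rho>"
proof -
  define k where "k = sum_list (take j ns)"
  have "ns = take j ns @ [ns ! j] @ drop (Suc j) ns"
    using j by (simp add: Cons_nth_drop_Suc)
  hence "sum_list ns = k + ns ! j + sum_list (drop (Suc j) ns)"
    unfolding k_def by (metis add.assoc sum_list_append sum_list.Cons sum_list.Nil add_0_right)
  hence e: "sum_list ns - ns ! j = k + (sum_list ns - k - ns ! j)" by simp
  show ?thesis
    unfolding red_def reduce_def k_def[symmetric] Let_def
    by (intro ext, subst e, simp add: sum_blists_append)
qed

lemma reduce_whole: "supported n \<rho> \<Longrightarrow> reduce 0 n n \<rho> = \<rho>"
  by (auto simp: reduce_def supported_def fun_eq_iff)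

lemma reduce_reduce:
  assumes "k + l \<le> m" "k0 + m \<le> n"
  shows "reduce k l m (reduce k0 m n \<rho>) = reduce (k0 + k) l n \<rho>"
proof (intro ext)
  fix x y :: "bool list"
  show "reduce k l m (reduce k0 m n \<rho>) x y = reduce (k0 + k) l n \<rho> x y"
  proof (cases "length x = l \<and> length y = l")
    case True
    have e: "n - (k0 + k + l) = (m - (k + l)) + (n - (k0 + m))" using assms by simp
    have "reduce k l m (reduce k0 m n \<rho>) x y =
      (\<Sum>u\<in>blists k. \<Sum>v\<in>blists (m - k - l). \<Sum>u0\<in>blists k0. \<Sum>v0\<in>blists (n - k0 - m).
         \<rho> (u0 @ (u @ x @ v) @ v0) (u0 @ (u @ y @ v) @ v0))"
      using True assms by (simp add: reduce_def)
    also have "\<dots> = (\<Sum>u0\<in>blists k0. \<Sum>u\<in>blists k. \<Sum>v\<in>blists (m - k - l). \<Sum>v0\<in>blists (n - k0 - m).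
         \<rho> (u0 @ (u @ x @ v) @ v0) (u0 @ (u @ y @ v) @ v0))"
      by (rule sum_reorder3_cab)
    also have "\<dots> = reduce (k0 + k) l n \<rho> x y"
      using True by (simp add: reduce_def e sum_blists_append)
    finally show ?thesis .
  qed (auto simp: reduce_def)
qed

lemma reduce_tensor_prod_left:
  assumes "k + l \<le> a"
  shows "reduce k l (a + b) (tensor_prod a A B) = (\<lambda>x y. trace b B * reduce k l a A x y)"
proof (intro ext)
  fix x y :: "bool list"
  show "reduce k l (a + b) (tensor_prod a A B) x y = trace b B * reduce k l a A x y"
  proof (cases "length x = l \<and> length y = l")
    case True
    obtain c where c: "a = k + l + c" using assms le_Suc_ex by blast
    have "reduce k l (a + b) (tensor_prod a A B) x y =
      (\<Sum>u\<in>blists k. \<Sum>v1\<in>blists (a - k - l). \<Sum>v2\<in>blists b. A (u @ x @ v1) (u @ y @ v1) * B v2 v2)"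
      using True unfolding c by (simp add: reduce_def sum_blists_append tensor_prod_def add.assoc)
    also have "\<dots> = trace b B * reduce k l a A x y"
      using True by (simp add: reduce_def trace_def sum_distrib_left sum_distrib_right mult_ac)
    finally show ?thesis .
  qed (auto simp: reduce_def)
qed

lemma reduce_tensor_prod_right:
  assumes "a \<le> k" "k + l \<le> a + b"
  shows "reduce k l (a + b) (tensor_prod a A B) = (\<lambda>x y. trace a A * reduce (k - a) l b B x y)"
proof (intro ext)
  fix x y :: "bool list"
  show "reduce k l (a + b) (tensor_prod a A B) x y = trace a A * reduce (k - a) l b B x y"
  proof (cases "length x = l \<and> length y = l")
    case True
    obtain c where c: "k = a + c" using assms(1) le_Suc_ex by blast
    have "reduce k l (a + b) (tensor_prod a A B) x y =
      (\<Sum>u1\<in>blists a. \<Sum>u2\<in>blists (k - a). \<Sum>v\<in>blists (b - (k - a) - l).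
         A u1 u1 * B (u2 @ x @ v) (u2 @ y @ v))"
      using True assms unfolding c by (simp add: reduce_def sum_blists_append tensor_prod_def)
    also have "\<dots> = trace a A * reduce (k - a) l b B x y"
      using True
      by (simp add: reduce_def trace_def sum_distrib_left sum_distrib_right mult_ac)
        (rule sum_reorder3_bca)
    finally show ?thesis .
  qed (auto simp: reduce_def)
qed

lemma unitary_tensor_prod3_kernel:
  assumes u1: "unitary k G1" and u3: "unitary r G3"
    and len: "length x = m" "length y = m" "length b1 = k" "length a1 = k"
      "length b2 = m" "length a2 = m" "length b3 = r" "length a3 = r"
  shows "(\<Sum>u\<in>blists k. \<Sum>v\<in>blists r.
            tensor_prod k G1 (tensor_prod m G2 G3) (u @ x @ v) (b1 @ b2 @ b3) *
            cnj (tensor_prod k G1 (tensor_prod m G2 G3) (u @ y @ v) (a1 @ a2 @ a3))) =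
         (if a1 = b1 \<and> a3 = b3 then G2 x b2 * cnj (G2 y a2) else 0)"
proof -
  let ?c = "G2 x b2 * cnj (G2 y a2)"
  have "(\<Sum>u\<in>blists k. \<Sum>v\<in>blists r.
            tensor_prod k G1 (tensor_prod m G2 G3) (u @ x @ v) (b1 @ b2 @ b3) *
            cnj (tensor_prod k G1 (tensor_prod m G2 G3) (u @ y @ v) (a1 @ a2 @ a3))) =
        (\<Sum>u\<in>blists k. \<Sum>v\<in>blists r. G1 u b1 * cnj (G1 u a1) * (G3 v b3 * cnj (G3 v a3)) * ?c)"
    using len by (intro sum.cong refl) (simp add: tensor_prod_def mult_ac)
  also have "\<dots> = (\<Sum>u\<in>blists k. G1 u b1 * cnj (G1 u a1)) * (\<Sum>v\<in>blists r. G3 v b3 * cnj (G3 v a3)) * ?c"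
    by (simp only: sum_distrib_left sum_distrib_right) (rule sum.swap)
  finally show ?thesis
    using len by (simp add: unitary_columns[OF u1] unitary_columns[OF u3])
qed

lemma sum_blists3_delta:
  assumes "length b1 = k" "length b3 = r"
  shows "(\<Sum>a1\<in>blists k. \<Sum>a2\<in>blists m. \<Sum>a3\<in>blists r.
            if a1 = b1 \<and> a3 = b3 then f a1 a2 a3 else 0) = (\<Sum>a2\<in>blists m. f b1 a2 b3)"
proof -
  have "(\<Sum>a2\<in>blists m. \<Sum>a3\<in>blists r. if a1 = b1 \<and> a3 = b3 then f a1 a2 a3 else 0) =
        (if a1 = b1 then \<Sum>a2\<in>blists m. f a1 a2 b3 else 0)" for a1
    using assms by (cases "a1 = b1") simp_all
  thus ?thesis using assms by simp
qed

lemma reduce_apply_local: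
  assumes n: "n = k + m + r" and u1: "unitary k G1" and u3: "unitary r G3"
  shows "reduce k m n (apply_op n (tensor_prod k G1 (tensor_prod m G2 G3)) \<rho>) =
         apply_op m G2 (reduce k m n \<rho>)"
proof (intro ext)
  fix x y :: "bool list"
  let ?G = "tensor_prod k G1 (tensor_prod m G2 G3)"
  show "reduce k m n (apply_op n ?G \<rho>) x y = apply_op m G2 (reduce k m n \<rho>) x y"
  proof (cases "length x = m \<and> length y = m")
    case False thus ?thesis by (auto simp: reduce_def apply_op_def mult_def)
  next
    case True
    have r: "n - k - m = r" using n by simp
    define K where "K w w' = (\<Sum>u\<in>blists k. \<Sum>v\<in>blists r. ?G (u @ x @ v) w * cnj (?G (u @ y @ v) w'))"
      for w w'
    have "reduce k m n (apply_op n ?G \<rho>) x y =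
       (\<Sum>u\<in>blists k. \<Sum>v\<in>blists r. \<Sum>w\<in>blists n. \<Sum>w'\<in>blists n.
          ?G (u @ x @ v) w * \<rho> w w' * cnj (?G (u @ y @ v) w'))"
      using True n by (simp add: reduce_def apply_op_entry)
    also have "\<dots> = (\<Sum>w\<in>blists n. \<Sum>w'\<in>blists n. \<Sum>u\<in>blists k. \<Sum>v\<in>blists r.
          ?G (u @ x @ v) w * \<rho> w w' * cnj (?G (u @ y @ v) w'))"
      by (rule sum_reorder4_cdab)
    also have "\<dots> = (\<Sum>w\<in>blists n. \<Sum>w'\<in>blists n. \<rho> w w' * K w w')"
      unfolding K_def by (simp only: sum_distrib_left mult_ac)
    also have "\<dots> = (\<Sum>b1\<in>blists k. \<Sum>b2\<in>blists m. \<Sum>b3\<in>blists r.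
                      \<Sum>a1\<in>blists k. \<Sum>a2\<in>blists m. \<Sum>a3\<in>blists r.
         if a1 = b1 \<and> a3 = b3 then \<rho> (b1 @ b2 @ b3) (a1 @ a2 @ a3) * (G2 x b2 * cnj (G2 y a2)) else 0)"
      unfolding n sum_blists_append3 K_def using True
      by (intro sum.cong refl) (simp add: unitary_tensor_prod3_kernel[OF u1 u3])
    also have "\<dots> = (\<Sum>b1\<in>blists k. \<Sum>b2\<in>blists m. \<Sum>b3\<in>blists r. \<Sum>a2\<in>blists m.
         \<rho> (b1 @ b2 @ b3) (b1 @ a2 @ b3) * (G2 x b2 * cnj (G2 y a2)))"
      by (intro sum.cong refl sum_blists3_delta) simp_all
    also have "\<dots> = (\<Sum>b2\<in>blists m. \<Sum>a2\<in>blists m. \<Sum>b1\<in>blists k. \<Sum>b3\<in>blists r.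
         \<rho> (b1 @ b2 @ b3) (b1 @ a2 @ b3) * (G2 x b2 * cnj (G2 y a2)))"
      by (rule sum_reorder4_bdac)
    also have "\<dots> = apply_op m G2 (reduce k m n \<rho>) x y"
      using True r
      by (simp add: apply_op_entry reduce_def sum_distrib_left sum_distrib_right mult_ac)
    finally show ?thesis .
  qed
qed

lemma sum_blists_embed:
  assumes u: "length u = k" and w: "length w = r"
    and outside: "\<And>u' x w'. length u' = k \<Longrightarrow> length x = m \<Longrightarrow> length w' = r \<Longrightarrow>
                   u' \<noteq> u \<or> w' \<noteq> w \<Longrightarrow> f (u' @ x @ w') = 0"
  shows "(\<Sum>z\<in>blists (k + m + r). f z) = (\<Sum>x\<in>blists m. f (u @ x @ w))"
proof -
  have "(\<Sum>z\<in>blists (k + m + r). f z) =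
        (\<Sum>u'\<in>blists k. \<Sum>x\<in>blists m. \<Sum>w'\<in>blists r. if u' = u \<and> w' = w then f (u' @ x @ w') else 0)"
    unfolding sum_blists_append3 using outside by (intro sum.cong refl) auto
  also have "\<dots> = (\<Sum>x\<in>blists m. f (u @ x @ w))"
    using u w by (rule sum_blists3_delta)
  finally show ?thesis .
qed

lemma hermitian_reduce: "hermitian \<rho> \<Longrightarrow> hermitian (reduce k m n \<rho>)"
proof -
  assume "hermitian \<rho>"
  hence "cnj (\<rho> a b) = \<rho> b a" for a b by (metis hermitian_def complex_cnj_cnj)
  thus ?thesis by (simp add: hermitian_def reduce_def)
qed

lemma trace_reduce:
  assumes "n = k + m + r"
  shows "trace m (reduce k m n \<rho>) = trace n \<rho>"
proof -
  have "trace m (reduce k m n \<rho>) = (\<Sum>x\<in>blists m. \<Sum>u\<in>blists k. \<Sum>v\<in>blists r. \<rho> (u @ x @ v) (u @ x @ v))"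
    using assms by (simp add: trace_def reduce_def)
  also have "\<dots> = trace n \<rho>"
    unfolding trace_def assms sum_blists_append3 by (rule sum.swap)
  finally show ?thesis .
qed

text \<open>The quadratic form of the reduced state at \<open>v\<close> is a sum of quadratic forms of \<open>\<rho>\<close>,
  at the vectors \<open>v\<close> placed between fixed outer bit strings \<open>u\<close> and \<open>w\<close>.\<close>

lemma pos_semidef_reduce:
  assumes p: "pos_semidef n \<rho>" and n: "n = k + m + r"
  shows "pos_semidef m (reduce k m n \<rho>)"
  unfolding pos_semidef_def
proof
  fix v :: "bool list \<Rightarrow> complex"
  define V where "V u w z = (if take k z = u \<and> drop (k + m) z = w then v (take m (drop k z)) else 0)"
    for u w z
  have V: "V u w (u' @ x @ w') = (if u' = u \<and> w' = w then v x else 0)"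
    if "length u' = k" "length x = m" for u w u' x w'
    using that by (auto simp: V_def)
  have inner: "(\<Sum>x\<in>blists m. \<Sum>y\<in>blists m. cnj (v x) * \<rho> (u @ x @ w) (u @ y @ w) * v y) =
               (\<Sum>z\<in>blists n. \<Sum>z'\<in>blists n. cnj (V u w z) * \<rho> z z' * V u w z')"
    if u: "length u = k" and w: "length w = r" for u w
  proof -
    have "(\<Sum>z\<in>blists n. \<Sum>z'\<in>blists n. cnj (V u w z) * \<rho> z z' * V u w z') =
          (\<Sum>x\<in>blists m. \<Sum>z'\<in>blists n. cnj (V u w (u @ x @ w)) * \<rho> (u @ x @ w) z' * V u w z')"
      unfolding n by (rule sum_blists_embed[OF u w]) (auto simp: V)
    also have "\<dots> = (\<Sum>x\<in>blists m. \<Sum>y\<in>blists m.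
                      cnj (V u w (u @ x @ w)) * \<rho> (u @ x @ w) (u @ y @ w) * V u w (u @ y @ w))"
      unfolding n by (intro sum.cong refl sum_blists_embed[OF u w]) (auto simp: V)
    finally show ?thesis using u by (simp add: V)
  qed
  have "(\<Sum>x\<in>blists m. \<Sum>y\<in>blists m. cnj (v x) * reduce k m n \<rho> x y * v y) =
        (\<Sum>x\<in>blists m. \<Sum>y\<in>blists m. \<Sum>u\<in>blists k. \<Sum>w\<in>blists r.
           cnj (v x) * \<rho> (u @ x @ w) (u @ y @ w) * v y)"
    using n by (simp add: reduce_def sum_distrib_left sum_distrib_right)
  also have "\<dots> = (\<Sum>u\<in>blists k. \<Sum>w\<in>blists r. \<Sum>z\<in>blists n. \<Sum>z'\<in>blists n.
                    cnj (V u w z) * \<rho> z z' * V u w z')"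
    by (subst sum_reorder4_cdab) (simp add: inner)
  also have "0 \<le> Re \<dots>"
  proof -
    have q: "0 \<le> Re (\<Sum>z\<in>blists n. \<Sum>z'\<in>blists n. cnj (V u w z) * \<rho> z z' * V u w z')" for u w
      using p unfolding pos_semidef_def by blast
    show ?thesis by (subst Re_sum, rule sum_nonneg, subst Re_sum, rule sum_nonneg, rule q)
  qed
  finally show "0 \<le> Re (\<Sum>x\<in>blists m. \<Sum>y\<in>blists m. cnj (v x) * reduce k m n \<rho> x y * v y)" .
qed

lemma supported_reduce [simp]: "supported m (reduce k m n \<rho>)"
  by (simp add: supported_def reduce_def)

lemma density_reduce:
  assumes "density n \<rho>" and "n = k + m + r"
  shows "density m (reduce k m n \<rho>)"
  using assms by (simp add: density_iff hermitian_reduce trace_reduce pos_semidef_reduce)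

subsection \<open>Gram decomposition of positive semidefinite forms\<close>

definition quad_form :: "'a set \<Rightarrow> ('a \<Rightarrow> 'a \<Rightarrow> complex) \<Rightarrow> ('a \<Rightarrow> complex) \<Rightarrow> complex" where
  "quad_form S s v = (\<Sum>x\<in>S. \<Sum>y\<in>S. cnj (v x) * s x y * v y)"

definition hermitian_on :: "'a set \<Rightarrow> ('a \<Rightarrow> 'a \<Rightarrow> complex) \<Rightarrow> bool" where
  "hermitian_on S s \<longleftrightarrow> (\<forall>x\<in>S. \<forall>y\<in>S. s x y = cnj (s y x))"

definition pos_semidef_on :: "'a set \<Rightarrow> ('a \<Rightarrow> 'a \<Rightarrow> complex) \<Rightarrow> bool" where
  "pos_semidef_on S s \<longleftrightarrow> (\<forall>v. 0 \<le> Re (quad_form S s v))"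

lemma quad_form_add_point:
  assumes "finite S" "a \<in> S"
  shows "quad_form S s (\<lambda>x. v x + (if x = a then t else 0)) =
     quad_form S s v + cnj t * (\<Sum>y\<in>S. s a y * v y) + t * (\<Sum>x\<in>S. cnj (v x) * s x a) +
     cnj t * t * s a a"
proof -
  have "quad_form S s (\<lambda>x. v x + (if x = a then t else 0)) =
    (\<Sum>x\<in>S. \<Sum>y\<in>S. cnj (v x) * s x y * v y + (if x = a then cnj t * s a y * v y else 0)
        + (if y = a then cnj (v x) * s x a * t else 0)
        + (if x = a \<and> y = a then cnj t * s a a * t else 0))"
    unfolding quad_form_def by (intro sum.cong refl) (auto simp: algebra_simps)
  also have "\<dots> = quad_form S s v + cnj t * (\<Sum>y\<in>S. s a y * v y) +
                   t * (\<Sum>x\<in>S. cnj (v x) * s x a) + cnj t * t * s a a"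
  proof -
    have "(\<Sum>y\<in>S. if x = a then cnj t * s a y * v y else 0) =
          (if x = a then cnj t * (\<Sum>y\<in>S. s a y * v y) else 0)" for x
      by (simp add: sum_distrib_left mult_ac)
    moreover have "(\<Sum>y\<in>S. if x = a \<and> y = a then cnj t * s a a * t else 0) =
                   (if x = a then cnj t * s a a * t else 0)" for x
      using assms by (cases "x = a") simp_all
    ultimately show ?thesis
      using assms by (simp add: sum.distrib quad_form_def sum_distrib_left mult_ac)
  qed
  finally show ?thesis .
qed

lemma quad_form_indicator:
  assumes "finite S" "y \<in> S"
  shows "quad_form S s (\<lambda>x. if x = y then 1 else 0) = s y y"
proof -
  have "(\<Sum>y'\<in>S. cnj (if x = y then 1 else 0) * s x y' * (if y' = y then 1 else 0)) =
        (if x = y then s x y else 0)" for x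
    using assms by (cases "x = y") (simp_all add: if_distrib[of "\<lambda>t. _ * t"] cong: if_cong)
  thus ?thesis unfolding quad_form_def using assms by simp
qed

lemma pos_semidef_on_diag: "finite S \<Longrightarrow> y \<in> S \<Longrightarrow> pos_semidef_on S s \<Longrightarrow> 0 \<le> Re (s y y)"
  using quad_form_indicator unfolding pos_semidef_on_def by metis

text \<open>Testing the form at \<open>e\<^sub>y + t e\<^sub>a\<close> with \<open>t\<close> a large negative multiple of \<open>s a y\<close>.\<close>

lemma pos_semidef_on_zero_diag_row:
  assumes fin: "finite S" and a: "a \<in> S" and h: "hermitian_on S s" and p: "pos_semidef_on S s"
    and c: "s a a = 0" and y: "y \<in> S"
  shows "s a y = 0"
proof (rule ccontr)
  assume nz: "s a y \<noteq> 0"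
  define B where "B = s a y"
  have key: "0 \<le> Re (s y y) + 2 * Re (cnj t * B)" for t
  proof -
    let ?v = "\<lambda>x. if x = y then 1 else (0::complex)"
    have e1: "(\<Sum>y'\<in>S. s a y' * ?v y') = B" using fin y unfolding B_def
      by (simp add: if_distrib[of "\<lambda>t. _ * t"] cong: if_cong)
    have "s y a = cnj B" using h a y unfolding hermitian_on_def B_def by blast
    hence e2: "(\<Sum>x\<in>S. cnj (?v x) * s x a) = cnj B" using fin y
      by (simp add: if_distrib[of cnj] if_distrib[of "\<lambda>t. t * _"] cong: if_cong)
    have "0 \<le> Re (quad_form S s (\<lambda>x. ?v x + (if x = a then t else 0)))"
      using p unfolding pos_semidef_on_def by blast
    also have "quad_form S s (\<lambda>x. ?v x + (if x = a then t else 0)) = s y y + cnj t * B + t * cnj B"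
      unfolding quad_form_add_point[OF fin a] quad_form_indicator[OF fin y] e1 e2 c by simp
    finally show ?thesis by (simp add: mult.commute)
  qed
  define r where "r = (\<bar>Re (s y y)\<bar> + 1) / (2 * (cmod B)\<^sup>2)"
  have Bpos: "(cmod B)\<^sup>2 > 0" using nz unfolding B_def by simp
  have "cnj B * B = complex_of_real ((cmod B)\<^sup>2)"
    using complex_norm_square[of B] by (simp add: mult.commute)
  hence "Re (cnj (- complex_of_real r * B) * B) = - r * (cmod B)\<^sup>2"
    by (metis Re_complex_of_real complex_cnj_complex_of_real complex_cnj_mult mult.assoc
        mult_minus_left of_real_minus of_real_mult complex_cnj_minus)
  with key[of "- complex_of_real r * B"] have "0 \<le> Re (s y y) - 2 * r * (cmod B)\<^sup>2"
    by simp
  also have "2 * r * (cmod B)\<^sup>2 = \<bar>Re (s y y)\<bar> + 1" unfolding r_def using Bpos by simp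
  finally show False by simp
qed

text \<open>The Schur complement step: shift \<open>v\<close> along \<open>e\<^sub>a\<close> until it is orthogonal to \<open>w\<close>;
  the new form ignores the shift, the old one sees no rank-one correction.\<close>

lemma pos_semidef_on_subtract_rank_one:
  assumes fin: "finite T" and a: "a \<in> T" and p: "pos_semidef_on T s" and wa: "w a \<noteq> 0"
    and row: "\<And>y. y \<in> T \<Longrightarrow> s a y = w a * cnj (w y)"
    and col: "\<And>x. x \<in> T \<Longrightarrow> s x a = w x * cnj (w a)"
  shows "pos_semidef_on T (\<lambda>x y. s x y - w x * cnj (w y))"
  unfolding pos_semidef_on_def
proof
  fix v
  let ?s' = "\<lambda>x y. s x y - w x * cnj (w y)"
  define L where "L u = (\<Sum>x\<in>T. cnj (u x) * w x)" for u
  have QL: "quad_form T ?s' u = quad_form T s u - L u * cnj (L u)" for u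
  proof -
    have "quad_form T ?s' u =
          quad_form T s u - (\<Sum>x\<in>T. \<Sum>y\<in>T. (cnj (u x) * w x) * (cnj (w y) * u y))"
      unfolding quad_form_def by (simp add: algebra_simps sum_subtractf)
    also have "(\<Sum>x\<in>T. \<Sum>y\<in>T. (cnj (u x) * w x) * (cnj (w y) * u y)) = L u * cnj (L u)"
      unfolding L_def by (simp add: sum_product mult_ac) (rule sum.swap)
    finally show ?thesis .
  qed
  define t where "t = - cnj (L v / w a)"
  define u where "u x = v x + (if x = a then t else 0)" for x
  have "L u = L v + cnj t * w a"
    unfolding L_def u_def using fin a
    by (simp add: distrib_right sum.distrib if_distrib[of cnj] if_distrib[of "\<lambda>z. z * _"]
        cong: if_cong)
  hence Lu: "L u = 0" unfolding t_def using wa by simp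
  have "quad_form T ?s' v = quad_form T ?s' u"
    unfolding u_def quad_form_add_point[OF fin a] using row col a by simp
  also have "\<dots> = quad_form T s u" using QL[of u] Lu by simp
  finally show "0 \<le> Re (quad_form T ?s' v)" using p unfolding pos_semidef_on_def by simp
qed

lemma pos_semidef_on_split_row:
  assumes fin: "finite T" and a: "a \<in> T" and h: "hermitian_on T s" and p: "pos_semidef_on T s"
  obtains w where "hermitian_on T (\<lambda>x y. s x y - w x * cnj (w y))"
    and "pos_semidef_on T (\<lambda>x y. s x y - w x * cnj (w y))"
    and "\<And>y. y \<in> T \<Longrightarrow> s a y = w a * cnj (w y)"
    and "\<And>x. x \<in> T \<Longrightarrow> s x a = w x * cnj (w a)"
proof -
  have hT: "s x y = cnj (s y x)" if "x \<in> T" "y \<in> T" for x y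
    using h that unfolding hermitian_on_def by blast
  have herm: "hermitian_on T (\<lambda>x y. s x y - w x * cnj (w y))" for w
    unfolding hermitian_on_def
  proof (intro ballI)
    fix x y assume "x \<in> T" "y \<in> T"
    hence "s x y = cnj (s y x)" by (rule hT)
    thus "s x y - w x * cnj (w y) = cnj (s y x - w y * cnj (w x))" by (simp only:) simp
  qed
  show ?thesis
  proof (cases "s a a = 0")
    case True
    have row: "s a y = 0" if "y \<in> T" for y
      using pos_semidef_on_zero_diag_row[OF fin a h p True that] .
    have col: "s x a = 0" if "x \<in> T" for x
      using hT[OF that a] row[OF that] by simp
    show ?thesis by (rule that[of "\<lambda>_. 0"]) (use h p row col in simp_all)
  next
    case False
    have "Im (s a a) = 0" using arg_cong[OF hT[OF a a], of Im] by simp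
    hence saa: "s a a = complex_of_real (Re (s a a))" by (simp add: complex_eq_iff)
    have "0 \<le> Re (s a a)" by (rule pos_semidef_on_diag[OF fin a p])
    hence "0 < Re (s a a)" using False saa by (metis less_eq_real_def of_real_0)
    define q where "q = sqrt (Re (s a a))"
    have q: "q > 0" "s a a = complex_of_real (q * q)"
      using \<open>0 < Re (s a a)\<close> saa unfolding q_def by simp_all
    define w where "w x = s x a / complex_of_real q" for x
    have wa: "w a = complex_of_real q" using q unfolding w_def by simp
    have row: "s a y = w a * cnj (w y)" if "y \<in> T" for y
      using q hT[OF a that] unfolding w_def wa by simp
    have col: "s x a = w x * cnj (w a)" for x
      using q unfolding w_def wa by simp
    show ?thesis
      using that[OF herm pos_semidef_on_subtract_rank_one[OF fin a p _ row col]] q wa row col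
      by simp
  qed
qed

lemma hermitian_on_insertD: "hermitian_on (insert a S) s \<Longrightarrow> hermitian_on S s"
  unfolding hermitian_on_def by blast

lemma pos_semidef_on_insertD:
  assumes "a \<notin> S" "pos_semidef_on (insert a S) s"
  shows "pos_semidef_on S s"
  unfolding pos_semidef_on_def
proof
  fix v
  have "quad_form (insert a S) s (v(a := 0)) = quad_form S s v"
    using assms(1) by (cases "finite S") (auto simp: quad_form_def intro!: sum.cong)
  thus "0 \<le> Re (quad_form S s v)" using assms(2) unfolding pos_semidef_on_def by metis
qed

lemma pos_semidef_on_gram:
  assumes "finite S" "hermitian_on S s" "pos_semidef_on S s"
  shows "\<exists>ws. \<forall>x\<in>S. \<forall>y\<in>S. s x y = (\<Sum>w\<leftarrow>ws. w x * cnj (w y))"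
  using assms
proof (induction S arbitrary: s rule: finite_induct)
  case empty thus ?case by auto
next
  case (insert a S)
  obtain w where h': "hermitian_on (insert a S) (\<lambda>x y. s x y - w x * cnj (w y))"
    and p': "pos_semidef_on (insert a S) (\<lambda>x y. s x y - w x * cnj (w y))"
    and row: "\<And>y. y \<in> insert a S \<Longrightarrow> s a y = w a * cnj (w y)"
    and col: "\<And>x. x \<in> insert a S \<Longrightarrow> s x a = w x * cnj (w a)"
    using pos_semidef_on_split_row[of "insert a S" a s] insert by auto
  obtain ws where ws: "\<forall>x\<in>S. \<forall>y\<in>S. s x y - w x * cnj (w y) = (\<Sum>w\<leftarrow>ws. w x * cnj (w y))"
    using insert.IH[OF hermitian_on_insertD[OF h'] pos_semidef_on_insertD[OF insert.hyps(2) p']]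
    by blast
  have "s x y = (\<Sum>w'\<leftarrow>w # map (\<lambda>w'. w'(a := 0)) ws. w' x * cnj (w' y))"
    if "x \<in> insert a S" "y \<in> insert a S" for x y
  proof (cases "x = a \<or> y = a")
    case True thus ?thesis using row col that by (auto simp: o_def)
  next
    case False
    hence "x \<in> S" "y \<in> S" using that by auto
    hence "s x y - w x * cnj (w y) = (\<Sum>w\<leftarrow>ws. w x * cnj (w y))" using ws by blast
    thus ?thesis using False by (simp add: o_def algebra_simps)
  qed
  thus ?case by blast
qed

lemma pos_semidef_on_blists: "pos_semidef n \<rho> \<longleftrightarrow> pos_semidef_on (blists n) \<rho>"
  by (simp add: pos_semidef_def pos_semidef_on_def quad_form_def)

lemma hermitian_on_blists: "hermitian \<rho> \<Longrightarrow> hermitian_on (blists n) \<rho>"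
  unfolding hermitian_def hermitian_on_def by blast

lemma hermitian_tensor_prod: "hermitian A \<Longrightarrow> hermitian B \<Longrightarrow> hermitian (tensor_prod a A B)"
  unfolding hermitian_def tensor_prod_def by (metis complex_cnj_mult)

lemma trace_tensor_prod: "trace (a + b) (tensor_prod a A B) = trace a A * trace b B"
  by (simp add: trace_def sum_blists_append tensor_prod_def sum_product)

text \<open>Writing \<open>\<sigma>\<close> as a sum of rank-one forms \<open>W\<^sub>i W\<^sub>i\<^sup>*\<close>, the quadratic form of
  \<open>\<rho> \<otimes> \<sigma>\<close> becomes a sum of quadratic forms of \<open>\<rho>\<close>.\<close>

lemma pos_semidef_tensor_prod:
  assumes p\<rho>: "pos_semidef a \<rho>" and h\<sigma>: "hermitian \<sigma>" and p\<sigma>: "pos_semidef b \<sigma>"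
  shows "pos_semidef (a + b) (tensor_prod a \<rho> \<sigma>)"
  unfolding pos_semidef_def
proof
  fix v :: "bool list \<Rightarrow> complex"
  obtain ws where ws: "\<forall>x\<in>blists b. \<forall>y\<in>blists b. \<sigma> x y = (\<Sum>w\<leftarrow>ws. w x * cnj (w y))"
    using pos_semidef_on_gram[OF finite_blists hermitian_on_blists[OF h\<sigma>]] p\<sigma>
    unfolding pos_semidef_on_blists by blast
  define N where "N = length ws"
  define W where "W i = ws ! i" for i
  have \<sigma>: "\<sigma> x y = (\<Sum>i<N. W i x * cnj (W i y))" if "length x = b" "length y = b" for x y
    using ws that unfolding N_def W_def by (simp add: sum_list_sum_nth atLeast0LessThan)
  define V where "V i x1 = (\<Sum>y2\<in>blists b. cnj (W i y2) * v (x1 @ y2))" for i x1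
  let ?F = "\<lambda>x1 x2 y1 y2 i. cnj (v (x1 @ x2)) * \<rho> x1 y1 * (W i x2 * cnj (W i y2)) * v (y1 @ y2)"
  have "(\<Sum>x\<in>blists (a + b). \<Sum>y\<in>blists (a + b). cnj (v x) * tensor_prod a \<rho> \<sigma> x y * v y) =
     (\<Sum>x1\<in>blists a. \<Sum>x2\<in>blists b. \<Sum>y1\<in>blists a. \<Sum>y2\<in>blists b. \<Sum>i<N. ?F x1 x2 y1 y2 i)"
    by (simp add: sum_blists_append tensor_prod_def \<sigma> sum_distrib_left sum_distrib_right mult_ac)
  also have "\<dots> = (\<Sum>x1\<in>blists a. \<Sum>y1\<in>blists a. \<Sum>x2\<in>blists b. \<Sum>y2\<in>blists b. \<Sum>i<N. ?F x1 x2 y1 y2 i)"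
    by (rule sum.cong[OF refl], rule sum.swap)
  also have "\<dots> = (\<Sum>x1\<in>blists a. \<Sum>y1\<in>blists a. \<Sum>i<N. \<Sum>x2\<in>blists b. \<Sum>y2\<in>blists b. ?F x1 x2 y1 y2 i)"
    by (rule sum.cong[OF refl], rule sum.cong[OF refl], rule sum_reorder3_cab)
  also have "\<dots> = (\<Sum>i<N. \<Sum>x1\<in>blists a. \<Sum>y1\<in>blists a. \<Sum>x2\<in>blists b. \<Sum>y2\<in>blists b. ?F x1 x2 y1 y2 i)"
    by (rule sum_reorder3_cab)
  also have "\<dots> = (\<Sum>i<N. \<Sum>x1\<in>blists a. \<Sum>y1\<in>blists a. cnj (V i x1) * \<rho> x1 y1 * V i y1)"
    unfolding V_def by (simp add: sum_distrib_left sum_distrib_right mult_ac)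
  also have "0 \<le> Re \<dots>"
  proof -
    have q: "0 \<le> Re (\<Sum>x1\<in>blists a. \<Sum>y1\<in>blists a. cnj (V i x1) * \<rho> x1 y1 * V i y1)" for i
      using p\<rho> unfolding pos_semidef_def by blast
    show ?thesis by (subst Re_sum, rule sum_nonneg, rule q)
  qed
  finally show "0 \<le> Re (\<Sum>x\<in>blists (a + b). \<Sum>y\<in>blists (a + b). cnj (v x) * tensor_prod a \<rho> \<sigma> x y * v y)" .
qed

lemma density_tensor_prod:
  "density a \<rho> \<Longrightarrow> density b \<sigma> \<Longrightarrow> density (a + b) (tensor_prod a \<rho> \<sigma>)"
  by (simp add: density_iff supported_tensor_prod hermitian_tensor_prod trace_tensor_prod
      pos_semidef_tensor_prod)

lemma sum_blists_prod:
  "(\<Sum>z\<in>blists n. \<Prod>i<n. f i (z ! i)) = (\<Prod>i<n. f i False + f i True :: complex)"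
proof (induction n arbitrary: f)
  case 0 thus ?case by simp
next
  case (Suc n)
  have "(\<Sum>z\<in>blists (Suc n). \<Prod>i<Suc n. f i (z ! i)) =
        (\<Sum>u\<in>blists 1. \<Sum>v\<in>blists n. \<Prod>i<Suc n. f i ((u @ v) ! i))"
    using sum_blists_append[where a = 1 and b = n] by simp
  also have "\<dots> = (\<Sum>u\<in>blists 1. \<Sum>v\<in>blists n. f 0 (hd u) * (\<Prod>i<n. f (Suc i) (v ! i)))"
    by (intro sum.cong refl)
      (auto simp: length_Suc_conv prod.lessThan_Suc_shift simp del: prod.lessThan_Suc)
  also have "\<dots> = (f 0 False + f 0 True) * (\<Sum>v\<in>blists n. \<Prod>i<n. f (Suc i) (v ! i))"
    by (simp add: blists_Suc0 sum_distrib_left distrib_right sum.distrib)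
  also have "\<dots> = (f 0 False + f 0 True) * (\<Prod>i<n. f (Suc i) False + f (Suc i) True)"
    using Suc[of "\<lambda>i. f (Suc i)"] by simp
  also have "\<dots> = (\<Prod>i<Suc n. f i False + f i True)"
    by (simp add: prod.lessThan_Suc_shift del: prod.lessThan_Suc)
  finally show ?case .
qed

lemma prod_nth_indicator:
  assumes "length x = n" "length y = n"
  shows "(\<Prod>i<n. if x ! i = y ! i then 1 else 0 :: complex) = (if x = y then 1 else 0)"
proof (cases "x = y")
  case False
  then obtain i where "i < n" "x ! i \<noteq> y ! i" using assms nth_equalityI by metis
  thus ?thesis using False by (intro trans[OF prod_zero]) auto
qed simp

lemma mult_Tn:
  "mult n (Tn U n) (Tn V n) = Tn (\<lambda>a b. U a False * V False b + U a True * V True b) n"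
proof (intro ext)
  fix x y :: "bool list"
  show "mult n (Tn U n) (Tn V n) x y = Tn (\<lambda>a b. U a False * V False b + U a True * V True b) n x y"
    using sum_blists_prod[where f = "\<lambda>i c. U (x ! i) c * V c (y ! i)"]
    by (simp add: mult_def Tn_def prod.distrib)
qed

lemma adj_Tn: "adj (Tn U n) = Tn (\<lambda>a b. cnj (U b a)) n"
  by (auto simp: fun_eq_iff adj_def Tn_def)

lemma Tn_indicator: "Tn (\<lambda>a b. if a = b then 1 else 0) n = id_op n"
  by (auto simp: fun_eq_iff Tn_def id_op_def prod_nth_indicator)

lemma unitary_Tn:
  assumes "unitary2 U"
  shows "unitary n (Tn U n)"
proof -
  have "(\<lambda>a b. U a False * cnj (U b False) + U a True * cnj (U b True)) = (\<lambda>a b. if a = b then 1 else 0)"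
       "(\<lambda>a b. cnj (U False a) * U False b + cnj (U True a) * U True b) = (\<lambda>a b. if a = b then 1 else 0)"
    using assms unfolding unitary2_def by (simp_all add: UNIV_bool fun_eq_iff)
  thus ?thesis
    by (simp add: unitary_def mult_Tn adj_Tn Tn_indicator) (simp add: supported_def Tn_def)
qed

lemma perm_gate_involution:
  assumes f: "\<And>y. length y = n \<Longrightarrow> length (f y) = n \<and> f (f y) = y"
  shows adj_perm_gate: "adj (perm_gate n f) = perm_gate n f"
    and mult_perm_gate: "mult n (perm_gate n f) (perm_gate n f) = id_op n"
proof -
  have eq: "x = f y \<longleftrightarrow> y = f x" if "length x = n" "length y = n" for x y
    using f that by metis
  show "adj (perm_gate n f) = perm_gate n f"
  proof (intro ext)
    fix x y :: "bool list"
    show "adj (perm_gate n f) x y = perm_gate n f x y"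
      unfolding adj_def perm_gate_def using eq[of x y] by auto
  qed
  show "mult n (perm_gate n f) (perm_gate n f) = id_op n"
  proof (intro ext)
    fix x y :: "bool list"
    show "mult n (perm_gate n f) (perm_gate n f) x y = id_op n x y"
    proof (cases "length x = n \<and> length y = n")
      case True
      hence "mult n (perm_gate n f) (perm_gate n f) x y =
             (\<Sum>z\<in>blists n. (if x = f z then 1 else 0) * (if z = f y then 1 else 0))"
        by (simp add: mult_def perm_gate_def)
      also have "\<dots> = (\<Sum>z\<in>blists n. if z = f y then (if x = f z then 1 else 0) else 0)"
        by (intro sum.cong refl) simp
      also have "\<dots> = id_op n x y"
        using True f eq[of x y] by (auto simp: id_op_def)
      finally show ?thesis .
    qed (auto simp: mult_def id_op_def)
  qed
qed

lemma unitary_perm_gate: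
  assumes "\<And>y. length y = n \<Longrightarrow> length (f y) = n \<and> f (f y) = y"
  shows "unitary n (perm_gate n f)"
  using perm_gate_involution[OF assms]
  by (simp add: unitary_def supported_def perm_gate_def)

lemma At_pos: "At a \<ge> 1"
  by (induction a) auto

lemma unitary_NOT_g:
  assumes "n \<ge> 1"
  shows "unitary n (NOT_g n)"
  unfolding NOT_g_def
proof (rule unitary_perm_gate)
  fix y :: "bool list" assume l: "length y = n"
  hence "y \<noteq> []" using assms by auto
  thus "length (butlast y @ [\<not> last y]) = n \<and>
        butlast (butlast y @ [\<not> last y]) @ [\<not> last (butlast y @ [\<not> last y])] = y"
    using l assms by simp
qed

lemma unitary_XOR_g:
  assumes "m \<ge> 1" "n \<ge> 1"
  shows "unitary (m + n) (XOR_g m n)"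
  unfolding XOR_g_def
proof (rule unitary_perm_gate)
  fix w :: "bool list" assume l: "length w = m + n"
  let ?f = "\<lambda>w. butlast w @ [w ! (m - 1) \<noteq> last w]"
  have "m - 1 < length (butlast w)" using l assms by simp
  hence "?f w ! (m - 1) = w ! (m - 1)" by (simp add: nth_append nth_butlast)
  moreover have "w \<noteq> []" using l assms by auto
  moreover have "(a = (a = L)) = L" for a L :: bool by auto
  ultimately show "length (?f w) = m + n \<and> ?f (?f w) = w"
    using l assms by simp
qed

lemma unitary_TOFF_g:
  assumes "m \<ge> 1" "n \<ge> 1" "p \<ge> 1"
  shows "unitary (m + n + p) (TOFF_g m n p)"
  unfolding TOFF_g_def
proof (rule unitary_perm_gate)
  fix w :: "bool list" assume l: "length w = m + n + p"
  let ?f = "\<lambda>w. butlast w @ [(w ! (m - 1) \<and> w ! (m + n - 1)) \<noteq> last w]"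
  have "m - 1 < length (butlast w)" "m + n - 1 < length (butlast w)" using l assms by simp_all
  hence "?f w ! (m - 1) = w ! (m - 1)" "?f w ! (m + n - 1) = w ! (m + n - 1)"
    by (simp_all add: nth_append nth_butlast)
  moreover have "w \<noteq> []" using l assms by auto
  moreover have "(a = (a = L)) = L" for a L :: bool by auto
  ultimately show "length (?f w) = m + n + p \<and> ?f (?f w) = w"
    using l assms by simp
qed

lemma last_qubit_gate_eq:
  assumes "n \<ge> 1"
  shows "(\<lambda>x y. if length x = n \<and> length y = n \<and> butlast x = butlast y then g (last x) (last y) else 0) =
         tensor_prod (n - 1) (id_op (n - 1)) (Tn g 1)"
proof (intro ext)
  fix x y :: "bool list"
  have split: "take (n - 1) z = butlast z" "drop (n - 1) z = [last z]" if "length z = n"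
    for z :: "bool list"
    using that assms by (simp_all add: butlast_conv_take) (metis One_nat_def append_butlast_last_id
        append_eq_conv_conj length_butlast list.size(3) not_one_le_zero)
  show "(if length x = n \<and> length y = n \<and> butlast x = butlast y then g (last x) (last y) else 0) =
        tensor_prod (n - 1) (id_op (n - 1)) (Tn g 1) x y"
  proof (cases "length x = n \<and> length y = n")
    case True
    hence "tensor_prod (n - 1) (id_op (n - 1)) (Tn g 1) x y =
           id_op (n - 1) (butlast x) (butlast y) * Tn g 1 [last x] [last y]"
      unfolding tensor_prod_def using split by simp
    thus ?thesis using True by (simp add: id_op_def Tn_def)
  qed (use assms in \<open>auto simp: tensor_prod_def id_op_def Tn_def\<close>)
qed

definition sqrt_id_matrix :: "bool \<Rightarrow> bool \<Rightarrow> complex" where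
  "sqrt_id_matrix b c = (if b = c then (if c then -1 else 1) else 1) / complex_of_real (sqrt 2)"

definition sqrt_not_matrix :: "bool \<Rightarrow> bool \<Rightarrow> complex" where
  "sqrt_not_matrix b c = (if b = c then (1 - \<i>) / 2 else (1 + \<i>) / 2)"

lemma unitary2_sqrt_id_matrix: "unitary2 sqrt_id_matrix"
proof -
  have s: "complex_of_real (sqrt 2) * complex_of_real (sqrt 2) = 2"
    by (metis of_real_mult real_sqrt_mult_self of_real_numeral abs_numeral real_sqrt_abs2 real_sqrt_mult)
  show ?thesis
    unfolding unitary2_def UNIV_bool
    by (auto simp: sqrt_id_matrix_def field_simps s)
qed

lemma unitary2_sqrt_not_matrix: "unitary2 sqrt_not_matrix"
  unfolding unitary2_def UNIV_bool
  by (auto simp: sqrt_not_matrix_def field_simps complex_eq_iff)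

lemma unitary_SQI_g:
  assumes "n \<ge> 1"
  shows "unitary n (SQI_g n)"
proof -
  have "SQI_g n = tensor_prod (n - 1) (id_op (n - 1)) (Tn sqrt_id_matrix 1)"
    unfolding last_qubit_gate_eq[OF assms, symmetric] SQI_g_def sqrt_id_matrix_def ..
  thus ?thesis
    using unitary_tensor_prod[OF unitary_id_op unitary_Tn[OF unitary2_sqrt_id_matrix], of "n - 1" 1] assms
    by simp
qed

lemma unitary_SQNOT_g:
  assumes "n \<ge> 1"
  shows "unitary n (SQNOT_g n)"
proof -
  have "SQNOT_g n = tensor_prod (n - 1) (id_op (n - 1)) (Tn sqrt_not_matrix 1)"
    unfolding last_qubit_gate_eq[OF assms, symmetric] SQNOT_g_def sqrt_not_matrix_def ..
  thus ?thesis
    using unitary_tensor_prod[OF unitary_id_op unitary_Tn[OF unitary2_sqrt_not_matrix], of "n - 1" 1] assms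
    by simp
qed

lemma conjT_eq_apply_op: "conjT U n G = apply_op n (Tn U n) G"
  by (simp add: conjT_def apply_op_def)

lemma unitary_gate_of:
  assumes u: "unitary2 U"
  shows "unitary (At b) (gate_of U b)"
proof -
  have conj: "unitary n (conjT U n G)" if "unitary n G" for n G
    unfolding conjT_def by (rule unitary_conjugate[OF unitary_Tn[OF u] that])
  show ?thesis
    by (cases b) (simp_all add: unitary_id_op conj unitary_NOT_g[OF At_pos]
        unitary_SQI_g[OF At_pos] unitary_SQNOT_g[OF At_pos] unitary_XOR_g[OF At_pos At_pos]
        unitary_TOFF_g[OF At_pos At_pos At_pos])
qed

lemma density_basis_proj:
  "density 1 (\<lambda>x y. if length x = 1 \<and> x = y \<and> last x = b then 1 else 0)"
proof -
  let ?D = "\<lambda>x y. if length x = 1 \<and> x = y \<and> last x = b then 1 else (0::complex)"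
  have "(\<Sum>x\<in>blists 1. \<Sum>y\<in>blists 1. cnj (v x) * ?D x y * v y) = cnj (v [b]) * v [b]" for v
    by (cases b) (simp_all add: blists_Suc0)
  hence "pos_semidef 1 ?D" by (simp add: pos_semidef_def mult.commute)
  moreover have "trace 1 ?D = 1" by (cases b) (simp_all add: trace_def blists_Suc0)
  ultimately show ?thesis by (auto simp: density_iff supported_def hermitian_def)
qed

lemma density_P1: "unitary2 U \<Longrightarrow> density 1 (P1 U 1)"
  using density_apply_op[OF density_basis_proj[of True] unitary_Tn]
  by (simp add: P1_def conjT_eq_apply_op)

lemma density_P0: "unitary2 U \<Longrightarrow> density 1 (P0 U 1)"
  using density_apply_op[OF density_basis_proj[of False] unitary_Tn]
  by (simp add: P0_def conjT_eq_apply_op)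

section \<open>Formula trees\<close>

abbreviation total_At :: "form list \<Rightarrow> nat" where
  "total_At L \<equiv> sum_list (map At L)"

abbreviation expand_iter :: "nat \<Rightarrow> form list \<Rightarrow> form list" where
  "expand_iter s \<equiv> expand_all ^^ s"

lemma level_eq_expand_iter: "level a i = expand_iter (i - 1) [a]"
  by (simp add: level_def)

lemma expand_all_append [simp]: "expand_all (xs @ ys) = expand_all xs @ expand_all ys"
  by (simp add: expand_all_def)

lemma expand_iter_append: "expand_iter s (xs @ ys) = expand_iter s xs @ expand_iter s ys"
  by (induction s) auto

lemma expand_iter_add: "expand_iter s (expand_iter t L) = expand_iter (s + t) L"
  by (simp add: funpow_add)

lemma expand_iter_Suc_right: "expand_iter (Suc s) L = expand_iter s (expand_all L)"
  by (simp add: funpow_Suc_right del: funpow.simps)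

lemma expand_all_single: "\<not> atomic a \<Longrightarrow> expand_all [a] = args a"
  by (simp add: expand_all_def expand_def)

lemma expand_iter_atomic: "\<forall>e\<in>set L. atomic e \<Longrightarrow> expand_iter s L = L"
proof (induction s)
  case (Suc s)
  have "expand_all L = L" using Suc.prems by (induction L) (auto simp: expand_all_def expand_def)
  thus ?case using Suc by simp
qed simp

lemma total_At_args: "\<not> atomic a \<Longrightarrow> total_At (args a) = At a"
  by (cases a) auto

lemma total_At_expand_iter: "total_At (expand_iter s xs) = total_At xs"
proof (induction s)
  case (Suc s)
  have "total_At (expand_all ys) = total_At ys" for ys
    by (induction ys) (auto simp: expand_all_def expand_def total_At_args)
  thus ?case using Suc by simp
qed simp

lemma total_At_level: "total_At (level g i) = At g"
  by (simp add: level_eq_expand_iter total_At_expand_iter)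

lemma total_At_take_nth_le: "j < length L \<Longrightarrow> total_At (take j L) + At (L ! j) \<le> total_At L"
proof -
  assume "j < length L"
  hence "L = take j L @ L ! j # drop (Suc j) L" by (simp add: Cons_nth_drop_Suc)
  hence "total_At L = total_At (take j L) + At (L ! j) + total_At (drop (Suc j) L)"
    by (metis add.assoc list.map(2) map_append sum_list.Cons sum_list_append)
  thus ?thesis by simp
qed

lemma height_pos: "height a \<ge> 1"
  by (induction a) auto

lemma height_gt_0: "0 < height a"
  using height_pos[of a] by simp

lemma height_atomic: "atomic a \<longleftrightarrow> height a = 1"
  by (cases a) (auto simp: height_gt_0)

lemma height_args: "e \<in> set (args a) \<Longrightarrow> height e < height a"
  by (cases a) auto

lemma args_atomic: "atomic a \<Longrightarrow> args a = []"
  by (cases a) auto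

lemma expand_iter_Suc_args: "\<not> atomic a \<Longrightarrow> expand_iter (Suc s) [a] = expand_iter s (args a)"
  by (simp add: expand_iter_Suc_right expand_all_single del: funpow.simps)

lemma subf_eq: "subf a = insert a (\<Union>e\<in>set (args a). subf e)"
  by (cases a) auto

lemma subf_self: "a \<in> subf a"
  by (subst subf_eq) simp

lemma subf_trans: "e \<in> subf f \<Longrightarrow> f \<in> subf g \<Longrightarrow> e \<in> subf g"
  by (induction g) auto

lemma mem_expand_iter_Suc:
  assumes "e \<in> set (expand_iter (Suc s) [g])"
  obtains f where "f \<in> set (expand_iter s [g])" "e = f \<and> atomic f \<or> e \<in> set (args f)"
proof -
  obtain f where "f \<in> set (expand_iter s [g])" "e \<in> set (expand f)"
    using assms by (auto simp: expand_all_def)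
  thus ?thesis using that by (auto simp: expand_def split: if_splits)
qed

lemma height_expand_iter: "e \<in> set (expand_iter s [g]) \<Longrightarrow> height e + s \<le> height g \<or> atomic e"
proof (induction s arbitrary: e)
  case (Suc s)
  from Suc.prems obtain f where f: "f \<in> set (expand_iter s [g])" "e = f \<and> atomic f \<or> e \<in> set (args f)"
    by (rule mem_expand_iter_Suc)
  from f(2) consider "e = f" "atomic f" | "e \<in> set (args f)" by blast
  thus ?case
  proof cases
    case 2
    hence "\<not> atomic f" "height e < height f" using args_atomic height_args by fastforce+
    thus ?thesis using Suc.IH[OF f(1)] by simp
  qed simp
qed simp

lemma expand_iter_subf: "e \<in> set (expand_iter s [g]) \<Longrightarrow> e \<in> subf g"
proof (induction s arbitrary: e)
  case (Suc s)
  from Suc.prems obtain f where f: "f \<in> set (expand_iter s [g])" "e = f \<and> atomic f \<or> e \<in> set (args f)"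
    by (rule mem_expand_iter_Suc)
  have "f \<in> subf g" using Suc.IH[OF f(1)] .
  moreover have "e \<in> subf f" using f(2) subf_eq[of f] subf_self[of e] by auto
  ultimately show ?case using subf_trans by blast
qed (simp add: subf_self)

lemma expand_iter_last_atomic: "e \<in> set (expand_iter s [g]) \<Longrightarrow> height g \<le> Suc s \<Longrightarrow> atomic e"
  using height_expand_iter[of e s g] height_atomic[of e] height_pos[of e] by auto

lemma expand_iter_stable:
  assumes "height g \<le> Suc s" "s \<le> s'"
  shows "expand_iter s' [g] = expand_iter s [g]"
proof -
  have "expand_iter (s' - s) (expand_iter s [g]) = expand_iter s [g]"
    using expand_iter_last_atomic assms(1) by (blast intro: expand_iter_atomic)
  thus ?thesis using assms(2) by (simp add: expand_iter_add)
qed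

lemma subf_occurs:
  "\<phi> \<in> subf g \<Longrightarrow> \<exists>t A B. expand_iter t [g] = A @ [\<phi>] @ B \<and> t < height g"
proof (induction "height g" arbitrary: g rule: less_induct)
  case less
  show ?case
  proof (cases "\<phi> = g")
    case True thus ?thesis using height_pos[of g] by (intro exI[of _ 0] exI[of _ "[]"]) auto
  next
    case False
    then obtain a where a: "a \<in> set (args g)" "\<phi> \<in> subf a"
      using less.prems subf_eq[of g] by auto
    hence na: "\<not> atomic g" using args_atomic by fastforce
    obtain P Q where PQ: "args g = P @ a # Q" using split_list[OF a(1)] by blast
    obtain t A B where t: "expand_iter t [a] = A @ [\<phi>] @ B" "t < height a"
      using less.hyps[OF height_args[OF a(1)] a(2)] by blast
    have "expand_iter (Suc t) [g] = expand_iter t (P @ [a] @ Q)"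
      using PQ by (simp only: expand_iter_Suc_args[OF na]) simp
    also have "\<dots> = expand_iter t P @ expand_iter t [a] @ expand_iter t Q"
      by (simp only: expand_iter_append)
    also have "\<dots> = (expand_iter t P @ A) @ [\<phi>] @ (B @ expand_iter t Q)"
      using t(1) by simp
    finally have "expand_iter (Suc t) [g] = (expand_iter t P @ A) @ [\<phi>] @ (B @ expand_iter t Q)" .
    moreover have "Suc t < height g" using t(2) height_args[OF a(1)] by simp
    ultimately show ?thesis by blast
  qed
qed

section \<open>Contextual meanings are local\<close>

definition gates :: "(bool \<Rightarrow> bool \<Rightarrow> complex) \<Rightarrow> form list \<Rightarrow> op" where
  "gates U L = tensor (map (\<lambda>b. (At b, gate_of U b)) L)"

lemma level_gate_eq: "level_gate U g i = gates U (level g i)"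
  by (simp add: level_gate_def gates_def)

lemma gates_append: "gates U (xs @ ys) = tensor_prod (total_At xs) (gates U xs) (gates U ys)"
  by (simp add: gates_def tensor_append o_def)

lemma unitary_gates: "unitary2 U \<Longrightarrow> unitary (total_At L) (gates U L)"
proof (induction L)
  case Nil thus ?case by (simp add: gates_def tensor_Nil unitary_id_op del: tensor.simps)
next
  case (Cons b L)
  thus ?case
    by (simp add: gates_def tensor_Cons unitary_tensor_prod unitary_gate_of del: tensor.simps)
qed

lemma gates_atomic: "\<forall>e\<in>set L. atomic e \<Longrightarrow> gates U L = id_op (total_At L)"
proof (induction L)
  case Nil thus ?case by (simp add: gates_def tensor_Nil del: tensor.simps)
next
  case (Cons b L)
  hence "gate_of U b = id_op 1" "At b = 1" by (cases b; simp)+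
  thus ?case using Cons
    by (simp add: gates_def tensor_Cons id_op_tensor_prod[symmetric] del: tensor.simps)
qed

lemma unitary_level_gate: "unitary2 U \<Longrightarrow> unitary (At e) (level_gate U e t)"
  using unitary_gates[of U "level e t"] by (simp add: level_gate_eq total_At_level)

lemma level_gate_bottom: "height e \<le> Suc t \<Longrightarrow> level_gate U e (Suc t) = id_op (At e)"
  using gates_atomic[of "level e (Suc t)" U] expand_iter_last_atomic[of _ t e]
  by (simp add: level_gate_eq level_eq_expand_iter total_At_expand_iter)

text \<open>The level states of \<open>e\<close> generated from the bottom state \<open>\<tau>\<close> as in condition (a).\<close>

function level_state :: "(bool \<Rightarrow> bool \<Rightarrow> complex) \<Rightarrow> form \<Rightarrow> nat \<Rightarrow> op \<Rightarrow> op" where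
  "level_state U e t \<tau> = (if height e \<le> t then \<tau>
     else apply_op (At e) (level_gate U e t) (level_state U e (Suc t) \<tau>))"
  by auto
termination by (relation "measure (\<lambda>(U, e, t, \<tau>). height e - t)") auto

declare level_state.simps [simp del]

lemma level_state_bottom: "height e \<le> t \<Longrightarrow> level_state U e t \<tau> = \<tau>"
  by (simp add: level_state.simps)

lemma level_state_step:
  "t < height e \<Longrightarrow> level_state U e t \<tau> = apply_op (At e) (level_gate U e t) (level_state U e (Suc t) \<tau>)"
  by (subst level_state.simps) simp

lemma density_level_state:
  "unitary2 U \<Longrightarrow> density (At e) \<tau> \<Longrightarrow> density (At e) (level_state U e t \<tau>)"
proof (induction U e t \<tau> rule: level_state.induct)
  case (1 U e t \<tau>)
  thus ?case
    by (cases "height e \<le> t")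
      (simp_all add: level_state_bottom level_state_step density_apply_op unitary_level_gate)
qed

lemma level_state_unfold:
  assumes "supported (At e) \<tau>"
  shows "level_state U e (Suc t) \<tau> =
         apply_op (At e) (level_gate U e (Suc t)) (level_state U e (Suc (Suc t)) \<tau>)"
proof (cases "Suc t < height e")
  case False
  thus ?thesis using assms by (simp add: level_gate_bottom apply_op_id level_state_bottom)
qed (simp add: level_state_step)

lemma level_gate_split:
  assumes L: "level g i = A @ [e] @ B" and i: "1 \<le> i" "i \<le> n"
  shows "level_gate U g n = tensor_prod (total_At A) (gates U (expand_iter (n - i) A))
           (tensor_prod (At e) (level_gate U e (Suc (n - i))) (gates U (expand_iter (n - i) B)))"
proof -
  have "level g n = expand_iter (n - i) (level g i)"
    using i by (simp add: level_eq_expand_iter expand_iter_add)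
  hence "level g n = expand_iter (n - i) A @ expand_iter (n - i) [e] @ expand_iter (n - i) B"
    unfolding L expand_iter_append .
  thus ?thesis
    by (simp add: level_gate_eq gates_append total_At_expand_iter level_eq_expand_iter)
qed

lemma reduce_level_step:
  assumes u: "unitary2 U"
    and gate: "\<And>t. 1 \<le> t \<Longrightarrow> t < height g \<Longrightarrow> \<Phi> t = apply_op (At g) (level_gate U g t) (\<Phi> (Suc t))"
    and L: "level g i = A @ [e] @ B" and n: "1 \<le> i" "i \<le> n" "n < height g"
  shows "reduce (total_At A) (At e) (At g) (\<Phi> n) =
         apply_op (At e) (level_gate U e (Suc (n - i))) (reduce (total_At A) (At e) (At g) (\<Phi> (Suc n)))"
proof -
  have Atg: "At g = total_At A + At e + total_At B"
    using total_At_level[of g i] unfolding L by simp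
  have uA: "unitary (total_At A) (gates U (expand_iter (n - i) A))"
    and uB: "unitary (total_At B) (gates U (expand_iter (n - i) B))"
    using unitary_gates[OF u] by (metis total_At_expand_iter)+
  have "\<Phi> n = apply_op (At g) (tensor_prod (total_At A) (gates U (expand_iter (n - i) A))
      (tensor_prod (At e) (level_gate U e (Suc (n - i))) (gates U (expand_iter (n - i) B))))
      (\<Phi> (Suc n))"
    using gate[of n] n level_gate_split[OF L n(1,2)] by simp
  thus ?thesis by (simp only: reduce_apply_local[OF Atg uA uB])
qed

lemma ctx_eq_level_state:
  assumes u: "unitary2 U"
    and gate: "\<And>t. 1 \<le> t \<Longrightarrow> t < height g \<Longrightarrow> \<Phi> t = apply_op (At g) (level_gate U g t) (\<Phi> (Suc t))"
    and i: "1 \<le> i" "i \<le> height g" and j: "j < length (level g i)"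
  shows "red (map At (level g i)) j (\<Phi> i) =
     level_state U (level g i ! j) 1
       (reduce (total_At (take j (level g i))) (At (level g i ! j)) (At g) (\<Phi> (height g)))"
proof -
  define e where "e = level g i ! j"
  define A where "A = take j (level g i)"
  define k where "k = total_At A"
  define \<tau> where "\<tau> = reduce k (At e) (At g) (\<Phi> (height g))"
  have L: "level g i = A @ [e] @ drop (Suc j) (level g i)"
    unfolding A_def e_def using j by (simp add: Cons_nth_drop_Suc)
  have he: "height e \<le> Suc (height g - i)"
    using height_expand_iter[of e "i - 1" g] height_atomic[of e] i j
    unfolding e_def level_eq_expand_iter by fastforce
  have "reduce k (At e) (At g) (\<Phi> n) = level_state U e (Suc (n - i)) \<tau>"
    if "n \<le> height g" "i \<le> n" for n
    using that
  proof (induction n rule: inc_induct)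
    case base
    show ?case using he by (simp add: \<tau>_def level_state_bottom)
  next
    case (step n)
    thus ?case
      using reduce_level_step[OF u gate L i(1) step.prems step.hyps(2)]
        level_state_unfold[of e \<tau> U "n - i", symmetric]
      by (simp add: Suc_diff_le \<tau>_def k_def)
  qed
  from this[of i] have "reduce k (At e) (At g) (\<Phi> i) = level_state U e 1 \<tau>" using i by simp
  moreover have "red (map At (level g i)) j (\<Phi> i) = reduce k (At e) (At g) (\<Phi> i)"
    using j total_At_level[of g i] by (simp add: red_eq_reduce k_def A_def e_def take_map)
  ultimately show ?thesis unfolding e_def \<tau>_def k_def A_def by simp
qed

text \<open>By \<open>ctx_eq_level_state\<close>, \<open>occ_meaning U L j n \<omega>\<close> is the contextual meaning of the
  \<open>j\<close>-th entry of a level \<open>L\<close> whose atoms carry the bottom state \<open>\<omega>\<close> on \<open>n\<close> qubits.\<close>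

definition occ_meaning :: "(bool \<Rightarrow> bool \<Rightarrow> complex) \<Rightarrow> form list \<Rightarrow> nat \<Rightarrow> nat \<Rightarrow> op \<Rightarrow> op" where
  "occ_meaning U L j n \<omega> = level_state U (L ! j) 1 (reduce (total_At (take j L)) (At (L ! j)) n \<omega>)"

definition realizes :: "(bool \<Rightarrow> bool \<Rightarrow> complex) \<Rightarrow> (form \<Rightarrow> op) \<Rightarrow> form list \<Rightarrow> op \<Rightarrow> bool" where
  "realizes U M fs \<omega> \<longleftrightarrow> (\<forall>s j. j < length (expand_iter s fs) \<longrightarrow>
     occ_meaning U (expand_iter s fs) j (total_At fs) \<omega> = M (expand_iter s fs ! j))"

lemma realizes_Nil: "realizes U M [] \<omega>"
  by (simp add: realizes_def expand_iter_atomic)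

lemma realizes_append:
  assumes r1: "realizes U M fs \<omega>1" and r2: "realizes U M gs \<omega>2"
    and t1: "trace (total_At fs) \<omega>1 = 1" and t2: "trace (total_At gs) \<omega>2 = 1"
  shows "realizes U M (fs @ gs) (tensor_prod (total_At fs) \<omega>1 \<omega>2)"
  unfolding realizes_def
proof (intro allI impI)
  fix s j
  let ?X = "expand_iter s fs" and ?Y = "expand_iter s gs"
  assume j: "j < length (expand_iter s (fs @ gs))"
  have XY: "expand_iter s (fs @ gs) = ?X @ ?Y" by (rule expand_iter_append)
  have sX: "total_At ?X = total_At fs" "total_At ?Y = total_At gs"
    by (simp_all add: total_At_expand_iter)
  show "occ_meaning U (expand_iter s (fs @ gs)) j (total_At (fs @ gs)) (tensor_prod (total_At fs) \<omega>1 \<omega>2) =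
        M (expand_iter s (fs @ gs) ! j)"
  proof (cases "j < length ?X")
    case True
    have "total_At (take j ?X) + At (?X ! j) \<le> total_At fs"
      using total_At_take_nth_le[OF True] sX by simp
    thus ?thesis
      using r1 True t2 reduce_tensor_prod_left[where b = "total_At gs" and A = \<omega>1 and B = \<omega>2]
      unfolding realizes_def occ_meaning_def XY by (simp add: nth_append)
  next
    case False
    define j' where "j' = j - length ?X"
    have j': "j' < length ?Y" using j False unfolding XY j'_def by simp
    have jj: "take j (?X @ ?Y) = ?X @ take j' ?Y" "(?X @ ?Y) ! j = ?Y ! j'"
      using False unfolding j'_def by (simp_all add: nth_append)
    have "total_At (take j' ?Y) + At (?Y ! j') \<le> total_At gs"
      using total_At_take_nth_le[OF j'] sX by simp
    thus ?thesis
      using r2 j' t1 reduce_tensor_prod_right[of "total_At fs" "total_At fs + total_At (take j' ?Y)"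
          "At (?Y ! j')" "total_At gs" \<omega>1 \<omega>2]
      unfolding realizes_def occ_meaning_def XY jj by (simp add: sX)
  qed
qed

lemma density_tensor:
  assumes "\<And>a. a \<in> set L \<Longrightarrow> density (At a) (st a)"
  shows "density (total_At L) (tensor (map (\<lambda>a. (At a, st a)) L))"
  using assms
proof (induction L)
  case Nil
  have "density 0 (id_op 0)"
    by (auto simp: density_iff supported_def hermitian_def pos_semidef_def trace_def id_op_def)
  thus ?case by (simp add: tensor_Nil del: tensor.simps)
next
  case (Cons a L)
  thus ?case by (simp add: tensor_Cons density_tensor_prod del: tensor.simps)
qed

lemma realizes_tensor:
  assumes "\<And>a. a \<in> set L \<Longrightarrow> realizes U M [a] (st a) \<and> density (At a) (st a)"
  shows "realizes U M L (tensor (map (\<lambda>a. (At a, st a)) L))"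
  using assms
proof (induction L)
  case Nil show ?case by (rule realizes_Nil)
next
  case (Cons a L)
  have "trace (total_At L) (tensor (map (\<lambda>a. (At a, st a)) L)) = 1"
    using density_tensor[of L st] Cons.prems by (simp add: density_trace)
  thus ?case
    using realizes_append[of U M "[a]" "st a" L] Cons density_trace
    by (simp add: tensor_Cons del: tensor.simps)
qed

lemma realizes_args:
  assumes na: "\<not> atomic \<phi>" and sp: "supported (At \<phi>) \<omega>" and m: "M \<phi> = level_state U \<phi> 1 \<omega>"
    and r: "realizes U M (args \<phi>) \<omega>"
  shows "realizes U M [\<phi>] \<omega>"
  unfolding realizes_def
proof (intro allI impI)
  fix s j assume j: "j < length (expand_iter s [\<phi>])"
  show "occ_meaning U (expand_iter s [\<phi>]) j (total_At [\<phi>]) \<omega> = M (expand_iter s [\<phi>] ! j)"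
  proof (cases s)
    case 0 thus ?thesis using j m sp by (simp add: occ_meaning_def reduce_whole)
  next
    case (Suc s')
    hence "expand_iter s [\<phi>] = expand_iter s' (args \<phi>)"
      by (simp only: expand_iter_Suc_args[OF na])
    thus ?thesis using r j unfolding realizes_def by (simp add: total_At_args[OF na])
  qed
qed

lemma realizes_atomic:
  assumes a: "atomic \<phi>" and sp: "supported (At \<phi>) \<omega>" and m: "M \<phi> = \<omega>"
  shows "realizes U M [\<phi>] \<omega>"
proof -
  have "expand_iter s [\<phi>] = [\<phi>]" for s using a by (simp add: expand_iter_atomic)
  moreover have "height \<phi> = 1" using a height_atomic by blast
  ultimately show ?thesis
    using sp m by (simp add: realizes_def occ_meaning_def reduce_whole level_state_bottom)
qed

lemma realizes_reduce:
  assumes r: "realizes U M (A @ [\<phi>] @ B) \<omega>"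
  shows "realizes U M [\<phi>] (reduce (total_At A) (At \<phi>) (total_At (A @ [\<phi>] @ B)) \<omega>)"
  unfolding realizes_def
proof (intro allI impI)
  fix s j
  let ?A = "expand_iter s A" and ?P = "expand_iter s [\<phi>]" and ?B = "expand_iter s B"
  let ?n = "total_At (A @ [\<phi>] @ B)"
  assume j: "j < length ?P"
  have E: "expand_iter s (A @ [\<phi>] @ B) = ?A @ ?P @ ?B" by (simp only: expand_iter_append)
  have sP: "total_At ?P = At \<phi>" "total_At ?A = total_At A" by (simp_all add: total_At_expand_iter)
  have le: "total_At (take j ?P) + At (?P ! j) \<le> At \<phi>" using total_At_take_nth_le[OF j] sP by simp
  have j2: "length ?A + j < length (expand_iter s (A @ [\<phi>] @ B))" using j E by simp
  have tk: "take (length ?A + j) (expand_iter s (A @ [\<phi>] @ B)) = ?A @ take j ?P"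
    "expand_iter s (A @ [\<phi>] @ B) ! (length ?A + j) = ?P ! j"
    unfolding E using j by (simp_all add: nth_append)
  have "reduce (total_At (take j ?P)) (At (?P ! j)) (At \<phi>) (reduce (total_At A) (At \<phi>) ?n \<omega>) =
        reduce (total_At A + total_At (take j ?P)) (At (?P ! j)) ?n \<omega>"
    by (rule reduce_reduce[OF le]) simp
  moreover have "occ_meaning U (expand_iter s (A @ [\<phi>] @ B)) (length ?A + j) ?n \<omega> = M (?P ! j)"
    using r j2 tk(2) unfolding realizes_def by metis
  ultimately show "occ_meaning U ?P j (total_At [\<phi>]) (reduce (total_At A) (At \<phi>) ?n \<omega>) = M (?P ! j)"
    using tk sP by (simp add: occ_meaning_def)
qed

lemma realizes_expand_iter: "realizes U M [g] \<omega> \<Longrightarrow> realizes U M (expand_iter t [g]) \<omega>"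
  unfolding realizes_def by (simp add: expand_iter_add total_At_expand_iter)

lemma realizes_cong:
  "realizes U M1 fs \<omega> \<Longrightarrow> (\<And>s e. e \<in> set (expand_iter s fs) \<Longrightarrow> M1 e = M2 e) \<Longrightarrow>
   realizes U M2 fs \<omega>"
  unfolding realizes_def by (metis nth_mem)

lemma occ_expand_iter:
  "expand_iter t [g] = A @ [\<phi>] @ B \<Longrightarrow> t < height g \<Longrightarrow>
   occ g (Suc t) (length A) \<and> level g (Suc t) ! length A = \<phi>"
  by (simp add: occ_def level_eq_expand_iter)

lemma holm_eqI:
  assumes all: "\<And>i j. occ g i j \<Longrightarrow> ctx H g i j = M (level g i ! j)" and s: "\<phi> \<in> subf g"
  shows "holm H g \<phi> = M \<phi>"
proof -
  obtain t A B where "expand_iter t [g] = A @ [\<phi>] @ B" "t < height g"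
    using subf_occurs[OF s] by blast
  hence "\<exists>\<rho> i j. occ g i j \<and> level g i ! j = \<phi> \<and> \<rho> = ctx H g i j"
    using occ_expand_iter by blast
  hence "\<exists>i j. occ g i j \<and> level g i ! j = \<phi> \<and> holm H g \<phi> = ctx H g i j"
    unfolding holm_def by (rule someI_ex)
  thus ?thesis using all by metis
qed

lemma holm_level:
  assumes h: "holistic U H" and o: "occ g i j"
  shows "holm H g (level g i ! j) = ctx H g i j"
proof -
  have "\<exists>\<rho> i' j'. occ g i' j' \<and> level g i' ! j' = level g i ! j \<and> \<rho> = ctx H g i' j'"
    using o by blast
  hence "\<exists>i' j'. occ g i' j' \<and> level g i' ! j' = level g i ! j \<and>
           holm H g (level g i ! j) = ctx H g i' j'"
    unfolding holm_def by (rule someI_ex)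
  thus ?thesis using h o unfolding holistic_def by metis
qed

lemma realizes_holm:
  assumes h: "holistic U H" and u: "unitary2 U"
  shows "realizes U (holm H \<gamma>) [\<gamma>] (H \<gamma> (height \<gamma>))"
  unfolding realizes_def
proof (intro allI impI)
  fix s j assume j: "j < length (expand_iter s [\<gamma>])"
  define i where "i = min (Suc s) (height \<gamma>)"
  have i: "1 \<le> i" "i \<le> height \<gamma>" unfolding i_def using height_pos[of \<gamma>] by auto
  have lev: "level \<gamma> i = expand_iter s [\<gamma>]"
  proof (cases "Suc s \<le> height \<gamma>")
    case True thus ?thesis unfolding i_def by (simp add: level_eq_expand_iter)
  next
    case False
    hence "expand_iter s [\<gamma>] = expand_iter (height \<gamma> - 1) [\<gamma>]" by (intro expand_iter_stable) auto
    thus ?thesis unfolding i_def using False by (simp add: level_eq_expand_iter)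
  qed
  have o: "occ \<gamma> i j" using i j lev by (simp add: occ_def)
  have gate: "\<And>t. 1 \<le> t \<Longrightarrow> t < height \<gamma> \<Longrightarrow>
              H \<gamma> t = apply_op (At \<gamma>) (level_gate U \<gamma> t) (H \<gamma> (Suc t))"
    using h unfolding holistic_def by blast
  have "ctx H \<gamma> i j = occ_meaning U (level \<gamma> i) j (At \<gamma>) (H \<gamma> (height \<gamma>))"
    unfolding ctx_def occ_meaning_def using ctx_eq_level_state[OF u gate i, of j] j lev by simp
  thus "occ_meaning U (expand_iter s [\<gamma>]) j (total_At [\<gamma>]) (H \<gamma> (height \<gamma>)) =
        holm H \<gamma> (expand_iter s [\<gamma>] ! j)"
    using holm_level[OF h o] lev by simp
qed

section \<open>Extending a holistic model\<close>

text \<open>Any occurrence of \<open>\<phi>\<close> in \<open>\<gamma>\<close> serves: \<open>realizes_shared_state\<close> holds whichever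
  one \<open>SOME\<close> picks.\<close>

definition shared_state :: "hol \<Rightarrow> form \<Rightarrow> form \<Rightarrow> op" where
  "shared_state H \<gamma> \<phi> =
     reduce (total_At (SOME A. \<exists>t B. expand_iter t [\<gamma>] = A @ [\<phi>] @ B \<and> t < height \<gamma>))
       (At \<phi>) (At \<gamma>) (H \<gamma> (height \<gamma>))"

lemma realizes_shared_state:
  assumes h: "holistic U H" and u: "unitary2 U" and s: "\<phi> \<in> subf \<gamma>"
  shows "realizes U (holm H \<gamma>) [\<phi>] (shared_state H \<gamma> \<phi>) \<and> density (At \<phi>) (shared_state H \<gamma> \<phi>)"
proof -
  define A where "A = (SOME A. \<exists>t B. expand_iter t [\<gamma>] = A @ [\<phi>] @ B \<and> t < height \<gamma>)"
  have "\<exists>A t B. expand_iter t [\<gamma>] = A @ [\<phi>] @ B \<and> t < height \<gamma>"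
    using subf_occurs[OF s] by blast
  hence "\<exists>t B. expand_iter t [\<gamma>] = A @ [\<phi>] @ B \<and> t < height \<gamma>"
    unfolding A_def by (rule someI_ex)
  then obtain t B where E: "expand_iter t [\<gamma>] = A @ [\<phi>] @ B" by blast
  have n: "total_At (A @ [\<phi>] @ B) = At \<gamma>"
    using total_At_expand_iter[of t "[\<gamma>]"] E by simp
  have "realizes U (holm H \<gamma>) (A @ [\<phi>] @ B) (H \<gamma> (height \<gamma>))"
    using realizes_expand_iter[OF realizes_holm[OF h u], of \<gamma> t] E by simp
  from realizes_reduce[OF this] have "realizes U (holm H \<gamma>) [\<phi>] (shared_state H \<gamma> \<phi>)"
    using n unfolding shared_state_def A_def[symmetric] by simp
  moreover have "density (At \<phi>) (shared_state H \<gamma> \<phi>)"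
    using h height_pos[of \<gamma>] n unfolding holistic_def shared_state_def A_def[symmetric]
    by (auto intro!: density_reduce[where r = "total_At B"])
  ultimately show ?thesis ..
qed

lemma size_args: "a \<in> set (args \<phi>) \<Longrightarrow> size a < size \<phi>"
  by (cases \<phi>) auto

text \<open>On atoms outside \<open>\<gamma>\<close> any density would do; the projections are chosen so that
  condition (c) holds for \<open>f\<close> and \<open>t\<close>.\<close>

function ext_state :: "(bool \<Rightarrow> bool \<Rightarrow> complex) \<Rightarrow> hol \<Rightarrow> form \<Rightarrow> form \<Rightarrow> op" where
  "ext_state U H \<gamma> \<phi> =
     (if \<phi> \<in> subf \<gamma> then shared_state H \<gamma> \<phi>
      else if atomic \<phi> then (if \<phi> = Ff then P0 U 1 else P1 U 1)
      else tensor (map (\<lambda>a. (At a, ext_state U H \<gamma> a)) (args \<phi>)))"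
  by auto
termination by (relation "measure (\<lambda>(U, H, \<gamma>, \<phi>). size \<phi>)") (auto dest: size_args)

declare ext_state.simps [simp del]

definition ext_meaning :: "(bool \<Rightarrow> bool \<Rightarrow> complex) \<Rightarrow> hol \<Rightarrow> form \<Rightarrow> form \<Rightarrow> op" where
  "ext_meaning U H \<gamma> \<phi> =
     (if \<phi> \<in> subf \<gamma> then holm H \<gamma> \<phi> else level_state U \<phi> 1 (ext_state U H \<gamma> \<phi>))"

lemma realizes_ext_state:
  assumes h: "holistic U H" and u: "unitary2 U"
  shows "realizes U (ext_meaning U H \<gamma>) [\<phi>] (ext_state U H \<gamma> \<phi>) \<and>
         density (At \<phi>) (ext_state U H \<gamma> \<phi>)"
proof (induction \<phi> rule: measure_induct_rule[of size])
  case (less \<phi>)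
  show ?case
  proof (cases "\<phi> \<in> subf \<gamma>")
    case True
    have "realizes U (ext_meaning U H \<gamma>) [\<phi>] (shared_state H \<gamma> \<phi>)"
    proof (rule realizes_cong)
      show "realizes U (holm H \<gamma>) [\<phi>] (shared_state H \<gamma> \<phi>)"
        using realizes_shared_state[OF h u True] ..
      fix s e assume "e \<in> set (expand_iter s [\<phi>])"
      hence "e \<in> subf \<gamma>" using expand_iter_subf subf_trans True by blast
      thus "holm H \<gamma> e = ext_meaning U H \<gamma> e" by (simp add: ext_meaning_def)
    qed
    thus ?thesis using realizes_shared_state[OF h u True] True by (simp add: ext_state.simps)
  next
    case notin: False
    show ?thesis
    proof (cases "atomic \<phi>")
      case True
      have st: "ext_state U H \<gamma> \<phi> = (if \<phi> = Ff then P0 U 1 else P1 U 1)"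
        using True notin by (simp add: ext_state.simps[of U H \<gamma> \<phi>])
      have "At \<phi> = 1" "height \<phi> = 1" using True by (cases \<phi>; simp)+
      moreover have d: "density 1 (ext_state U H \<gamma> \<phi>)"
        unfolding st using density_P0[OF u] density_P1[OF u] by simp
      ultimately show ?thesis
        using True notin density_supported[OF d]
        by (simp add: ext_meaning_def level_state_bottom realizes_atomic)
    next
      case False
      have IH: "realizes U (ext_meaning U H \<gamma>) [a] (ext_state U H \<gamma> a) \<and>
                density (At a) (ext_state U H \<gamma> a)" if "a \<in> set (args \<phi>)" for a
        using less size_args[OF that] by blast
      have d: "density (At \<phi>) (ext_state U H \<gamma> \<phi>)"
        using density_tensor[of "args \<phi>" "ext_state U H \<gamma>"] IH notin False
        by (simp add: ext_state.simps[of U H \<gamma> \<phi>] total_At_args)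
      have "realizes U (ext_meaning U H \<gamma>) [\<phi>] (ext_state U H \<gamma> \<phi>)"
        using False density_supported[OF d] notin
          realizes_tensor[of "args \<phi>" U "ext_meaning U H \<gamma>" "ext_state U H \<gamma>"] IH
        by (intro realizes_args) (simp_all add: ext_meaning_def ext_state.simps[of U H \<gamma> \<phi>])
      thus ?thesis using d ..
    qed
  qed
qed

lemma holm_constant:
  assumes h: "holistic U H" and s: "c \<in> subf \<gamma>"
  shows "c = Ff \<Longrightarrow> holm H \<gamma> c = P0 U 1" and "c = Tt \<Longrightarrow> holm H \<gamma> c = P1 U 1"
proof -
  obtain t A B where "expand_iter t [\<gamma>] = A @ [c] @ B" "t < height \<gamma>"
    using subf_occurs[OF s] by blast
  then obtain i j where o: "occ \<gamma> i j" "level \<gamma> i ! j = c" using occ_expand_iter by blast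
  hence "holm H \<gamma> c = ctx H \<gamma> i j" using holm_level[OF h o(1)] by simp
  thus "c = Ff \<Longrightarrow> holm H \<gamma> c = P0 U 1" and "c = Tt \<Longrightarrow> holm H \<gamma> c = P1 U 1"
    using h o unfolding holistic_def by auto
qed

lemma ext_meaning_Ff: "holistic U H \<Longrightarrow> ext_meaning U H \<gamma> Ff = P0 U 1"
  by (cases "Ff \<in> subf \<gamma>")
    (simp_all add: ext_meaning_def holm_constant ext_state.simps level_state_bottom)

lemma ext_meaning_Tt: "holistic U H \<Longrightarrow> ext_meaning U H \<gamma> Tt = P1 U 1"
  by (cases "Tt \<in> subf \<gamma>")
    (simp_all add: ext_meaning_def holm_constant ext_state.simps level_state_bottom)

lemma ctx_update:
  assumes u: "unitary2 U" and r: "realizes U M [g] \<omega>" and o: "occ g i j"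
  shows "ctx (H(g := (\<lambda>t. level_state U g t \<omega>))) g i j = M (level g i ! j)"
proof -
  have i: "1 \<le> i" "i \<le> height g" and j: "j < length (level g i)" using o by (auto simp: occ_def)
  have "ctx (H(g := (\<lambda>t. level_state U g t \<omega>))) g i j =
        red (map At (level g i)) j (level_state U g i \<omega>)"
    by (simp add: ctx_def)
  also have "\<dots> = occ_meaning U (level g i) j (At g) \<omega>"
    using ctx_eq_level_state[OF u _ i j, of "\<lambda>t. level_state U g t \<omega>"]
    by (simp add: level_state_step level_state_bottom occ_meaning_def)
  also have "\<dots> = M (level g i ! j)"
    using r j unfolding realizes_def level_eq_expand_iter by simp
  finally show ?thesis .
qed

lemma holistic_update:
  assumes u: "unitary2 U" and h: "holistic U H"
    and r: "realizes U M [g] \<omega>" and d: "density (At g) \<omega>"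
    and f: "M Ff = P0 U 1" and t: "M Tt = P1 U 1"
  defines "H' \<equiv> H(g := (\<lambda>t. level_state U g t \<omega>))"
  shows "holistic U H'" and "\<phi> \<in> subf g \<Longrightarrow> holm H' g \<phi> = M \<phi>"
proof -
  have ctx_g: "ctx H' g i j = M (level g i ! j)" if "occ g i j" for i j
    unfolding H'_def by (rule ctx_update[OF u r that])
  have ctx_other: "ctx H' g' = ctx H g'" if "g' \<noteq> g" for g'
    using that by (simp add: ctx_def[abs_def] H'_def)
  show "holistic U H'"
    unfolding holistic_def
  proof (intro conjI allI impI)
    fix a i assume "1 \<le> i \<and> i \<le> height a"
    thus "density (At a) (H' a i)"
      using h density_level_state[OF u d] unfolding holistic_def H'_def by auto
  next
    fix a i assume "1 \<le> i \<and> i < height a"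
    thus "H' a i = apply_op (At a) (level_gate U a i) (H' a (Suc i))"
      using h unfolding holistic_def H'_def by (auto simp: level_state_step)
  next
    fix g' i j i' j' assume "occ g' i j \<and> occ g' i' j' \<and> level g' i ! j = level g' i' ! j'"
    thus "ctx H' g' i j = ctx H' g' i' j'"
      using h ctx_g ctx_other unfolding holistic_def by (cases "g' = g") auto
  next
    fix g' i j assume "occ g' i j \<and> level g' i ! j = Ff"
    thus "ctx H' g' i j = P0 U 1"
      using h ctx_g ctx_other f unfolding holistic_def by (cases "g' = g") auto
  next
    fix g' i j assume "occ g' i j \<and> level g' i ! j = Tt"
    thus "ctx H' g' i j = P1 U 1"
      using h ctx_g ctx_other t unfolding holistic_def by (cases "g' = g") auto
  qed
  show "\<phi> \<in> subf g \<Longrightarrow> holm H' g \<phi> = M \<phi>"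
    using holm_eqI[OF ctx_g] by blast
qed

lemma holistic_extend:
  assumes u: "unitary2 U" and h: "holistic U H"
  shows "\<exists>H'. holistic U H' \<and> (\<forall>\<phi>\<in>subf \<gamma>. holm H' (Xor \<gamma> \<beta>) \<phi> = holm H \<gamma> \<phi>)"
proof -
  let ?g = "Xor \<gamma> \<beta>"
  let ?H' = "H(?g := (\<lambda>t. level_state U ?g t (ext_state U H \<gamma> ?g)))"
  have r: "realizes U (ext_meaning U H \<gamma>) [?g] (ext_state U H \<gamma> ?g)"
    and d: "density (At ?g) (ext_state U H \<gamma> ?g)"
    using realizes_ext_state[OF h u] by blast+
  note upd = holistic_update[OF u h r d ext_meaning_Ff[OF h] ext_meaning_Tt[OF h]]
  have "holm ?H' ?g \<phi> = holm H \<gamma> \<phi>" if "\<phi> \<in> subf \<gamma>" for \<phi>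
    using upd(2)[of \<phi>] that by (simp add: ext_meaning_def)
  thus ?thesis using upd(1) by blast
qed

theorem theorem4p16:
  fixes \<alpha> \<beta> \<delta> :: form
  shows "\<alpha> \<Turnstile> \<alpha> \<and> (\<alpha> \<Turnstile> \<beta> \<and> \<beta> \<Turnstile> \<delta> \<longrightarrow> \<alpha> \<Turnstile> \<delta>)"
proof (intro conjI impI)
  show "\<alpha> \<Turnstile> \<alpha>" by (simp add: entails_def)
next
  assume ab: "\<alpha> \<Turnstile> \<beta> \<and> \<beta> \<Turnstile> \<delta>"
  show "\<alpha> \<Turnstile> \<delta>"
    unfolding entails_def
  proof (intro allI impI, elim conjE)
    fix U \<gamma> H assume u: "unitary2 U" and a: "\<alpha> \<in> subf \<gamma>" and d: "\<delta> \<in> subf \<gamma>"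
      and h: "holistic U H"
    obtain H' where h': "holistic U H'"
      and same: "\<forall>\<phi>\<in>subf \<gamma>. holm H' (Xor \<gamma> \<beta>) \<phi> = holm H \<gamma> \<phi>"
      using holistic_extend[OF u h] by blast
    have sub: "\<alpha> \<in> subf (Xor \<gamma> \<beta>)" "\<beta> \<in> subf (Xor \<gamma> \<beta>)" "\<delta> \<in> subf (Xor \<gamma> \<beta>)"
      using a d subf_self[of \<beta>] by auto
    have "prob U (At \<alpha>) (holm H' (Xor \<gamma> \<beta>) \<alpha>) \<le> prob U (At \<beta>) (holm H' (Xor \<gamma> \<beta>) \<beta>)"
      using ab u h' sub unfolding entails_def by blast
    also have "\<dots> \<le> prob U (At \<delta>) (holm H' (Xor \<gamma> \<beta>) \<delta>)"
      using ab u h' sub unfolding entails_def by blast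
    finally show "prob U (At \<alpha>) (holm H \<gamma> \<alpha>) \<le> prob U (At \<delta>) (holm H \<gamma> \<delta>)"
      using same a d by simp
  qed
qed

end
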